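(* Let $\mathscr{D}(\mathbb{D})$ be the Dirichlet space of the unit disc. A linear map $R:\mathscr{D}(\mathbb{D})\to\mathscr{D}(\mathbb{D})$ is a bounded radial operator if and only if there exists a distribution $u\in\mathcal{D}'(\mathbb{T})$ with $(\hat u(m))_{m\in\mathbb{Z}_+}\in\ell^\infty(\mathbb{Z}_+)$ which induces an analytic function $g$ on $\mathbb{D}$ such that $$Rf(z)=\hat u(0)f(0)+z\int_{\mathbb{D}}f'(w)\,g'(z\bar w)\,dA(w)\quad\text{for all } f\in\mathscr{D}(\mathbb{D}),\ z\in\mathbb{D}.$$
   Context: $\mathbb{D}$ is the open unit disc, $dA$ the normalized area measure on $\mathbb{D}$, $\mathbb{Z}_+=\{0,1,2,\dots\}$. $\mathscr{D}(\mathbb{D})$ is the Hilbert space of holomorphic $f$ on $\mathbb{D}$ with $\|f\|^2=|f(0)|^2+\int_{\mathbb{D}}|f'|^2dA<\infty$; here $\|z^m\|^2=m$ for $m\ge1$ and $\|1\|=1$. For $\lambda\in\mathbb{T}=\{|\lambda|=1\}$, $V_\lambda f(z)=f(\lambda z)$; a bounded $R$ is radial if $RV_\lambda=V_\lambda R$ for all $\lambda\in\mathbb{T}$. $\mathcal{D}'(\mathbb{T})$ is the space of periodic distributions with Fourier coefficients $\hat u(m)$, $m\in\mathbb{Z}$. Induced functions are defined as for weighted Bergman spaces with the Dirichlet norm: for $0\le r<1$, $K_r$ is the distribution $\sum_{m\ge0}\|z^m\|^{-2}r^me^{im\theta}$, and $g$ is induced by $u$ if for every $r\in[0,1)$, $\theta\mapsto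 g(re^{i\theta})$ is the sum of the Fourier series of $K_r*u$, i.e. $g(z)=\sum_{m\ge0}\hat u(m)\|z^m\|^{-2}z^m$. *)

theory Defs
  imports "HOL-Analysis.Analysis"
begin

abbreviation disc :: "complex set" where "disc \<equiv> ball 0 1"

text \<open>Elements of the Dirichlet space are represented by holomorphic functions on the disc,
  normalised to be 0 outside the disc (so that equality of elements is equality of functions).\<close>
definition dirichlet_space :: "(complex \<Rightarrow> complex) set" where
  "dirichlet_space = {f. f holomorphic_on disc \<and> (\<forall>z. z \<notin> disc \<longrightarrow> f z = 0) \<and>
      set_integrable lborel disc (\<lambda>z. (cmod (deriv f z))\<^sup>2)}"

text \<open>Dirichlet norm, with dA = (Lebesgue area measure)/pi the normalised area measure.\<close>
definition dnorm :: "(complex \<Rightarrow> complex) \<Rightarrow> real" where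
  "dnorm f = sqrt ((cmod (f 0))\<^sup>2 + (LINT z:disc|lborel. (cmod (deriv f z))\<^sup>2) / pi)"

text \<open>Squared Dirichlet norm of the monomial z^m: m for m>=1, 1 for m=0.\<close>
definition mono_norm_sq :: "nat \<Rightarrow> real" where
  "mono_norm_sq m = (if m = 0 then 1 else real m)"

definition linear_on_dirichlet :: "((complex \<Rightarrow> complex) \<Rightarrow> (complex \<Rightarrow> complex)) \<Rightarrow> bool" where
  "linear_on_dirichlet R \<longleftrightarrow>
     (\<forall>f\<in>dirichlet_space. R f \<in> dirichlet_space) \<and>
     (\<forall>f\<in>dirichlet_space. \<forall>g\<in>dirichlet_space. R (\<lambda>z. f z + g z) = (\<lambda>z. R f z + R g z)) \<and>
     (\<forall>f\<in>dirichlet_space. \<forall>c. R (\<lambda>z. c * f z) = (\<lambda>z. c * R f z))"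

definition bounded_on_dirichlet :: "((complex \<Rightarrow> complex) \<Rightarrow> (complex \<Rightarrow> complex)) \<Rightarrow> bool" where
  "bounded_on_dirichlet R \<longleftrightarrow> (\<exists>C. \<forall>f\<in>dirichlet_space. dnorm (R f) \<le> C * dnorm f)"

definition rot :: "complex \<Rightarrow> (complex \<Rightarrow> complex) \<Rightarrow> (complex \<Rightarrow> complex)" where
  "rot l f = (\<lambda>z. f (l * z))"

definition radial_on_dirichlet :: "((complex \<Rightarrow> complex) \<Rightarrow> (complex \<Rightarrow> complex)) \<Rightarrow> bool" where
  "radial_on_dirichlet R \<longleftrightarrow>
     (\<forall>l. cmod l = 1 \<longrightarrow> (\<forall>f\<in>dirichlet_space. R (rot l f) = rot l (R f)))"

text \<open>Periodic distributions on T, represented by their Fourier coefficient sequences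
  (a sequence indexed by Z is the coefficient sequence of a periodic distribution iff it
  has at most polynomial growth).\<close>
definition periodic_distribution :: "(int \<Rightarrow> complex) \<Rightarrow> bool" where
  "periodic_distribution u \<longleftrightarrow> (\<exists>C N. \<forall>m. cmod (u m) \<le> C * (1 + real_of_int \<bar>m\<bar>) ^ N)"

definition induces :: "(int \<Rightarrow> complex) \<Rightarrow> (complex \<Rightarrow> complex) \<Rightarrow> bool" where
  "induces u g \<longleftrightarrow>
     (\<forall>z\<in>disc. (\<lambda>m. u (int m) / of_real (mono_norm_sq m) * z ^ m) sums g z)"

end

theory Submission
  imports Defs "HOL-Complex_Analysis.Complex_Analysis"
begin

text \<open>In the monomial basis the Dirichlet norm is diagonal: integrating Taylor series over
  discs, where the monomials are orthogonal, gives \<open>\<parallel>f\<parallel>\<^sup>2 = |f(0)|\<^sup>2 + \<Sum> n |a\<^sub>n|\<^sup>2\<close>.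
  A radial operator commutes with rotations, so comparing Taylor coefficients shows that it maps
  \<open>z\<^sup>m\<close> to \<open>\<mu>\<^sub>m z\<^sup>m\<close>; boundedness gives \<open>|\<mu>\<^sub>m| \<le> \<parallel>R\<parallel>\<close>, and since point evaluation
  is continuous, \<open>Rf = \<Sum> \<mu>\<^sub>n a\<^sub>n z\<^sup>n\<close>. Conversely \<open>\<integral>\<^sub>D f'(w) (cnj w)\<^sup>k dA(w) = a\<^sub>k\<^sub>+\<^sub>1\<close>
  and \<open>g'(\<zeta>) = \<Sum> u(k+1) \<zeta>\<^sup>k\<close>, so the integral formula is exactly the multiplier
  \<open>f \<mapsto> \<Sum> u(n) a\<^sub>n z\<^sup>n\<close>, which is bounded when \<open>u\<close> is and commutes with rotations.
  The orthogonality of the monomials rests on the rotation invariance of Lebesgue measure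
  on \<open>\<complex>\<close>, which follows from the Vitali covering theorem.\<close>

section \<open>Rotation invariance of Lebesgue measure on the plane\<close>

lemma cnj_mult_self_eq_1: "cmod l = 1 \<Longrightarrow> cnj l * l = 1"
  by (metis complex_norm_square mult.commute of_real_1 power_one)

lemma vimage_rotation_ball:
  assumes "cmod l = 1"
  shows "(\<lambda>w. l * w) -` ball c r = ball (cnj l * c) r"
proof -
  have "cmod (c - l * w) = cmod (cnj l * c - w)" for w
  proof -
    have "cmod (c - l * w) = cmod (cnj l * (c - l * w))" using assms by (simp add: norm_mult)
    also have "cnj l * (c - l * w) = cnj l * c - w"
      using cnj_mult_self_eq_1[OF assms] by (simp add: algebra_simps)
    finally show ?thesis .
  qed
  then show ?thesis by (auto simp: dist_norm)
qed

lemma null_sets_lborel_vimage_rotation: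
  assumes l: "cmod l = 1" and N: "N \<in> null_sets lborel"
  shows "(\<lambda>w. l * w) -` N \<in> null_sets lborel"
proof -
  have "negligible N" using N by (simp add: negligible_iff_null_sets null_sets_completionI)
  then have "negligible {w \<in> UNIV. l * w \<in> N}"
    using l by (intro negligible_differentiable_vimage[where f' = "\<lambda>_ h. l * h"])
      (auto simp: inj_def intro!: derivative_eq_intros)
  moreover have "(\<lambda>w. l * w) -` N \<in> sets borel"
    using N by (intro measurable_sets_borel[OF borel_measurable_continuous_onI]) (auto intro!: continuous_intros)
  ultimately show ?thesis
    by (simp add: negligible_iff_null_sets vimage_def null_sets_completion_iff)
qed

text \<open>By the Vitali covering theorem an open set is, up to a null set, a countable
  disjoint union of balls, and rotations preserve both balls and null sets.\<close>
lemma emeasure_lborel_vimage_rotation_open: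
  assumes l: "cmod l = 1" and U: "open U"
  shows "emeasure lborel ((\<lambda>w. l * w) -` U) = emeasure lborel U"
proof -
  define T where "T = (\<lambda>w::complex. l * w)"
  have "T \<in> borel_measurable borel"
    unfolding T_def by (intro borel_measurable_continuous_onI continuous_intros)
  then have T_borel: "T -` S \<in> sets lborel" if "S \<in> sets borel" for S
    using measurable_sets_borel that by auto
  define K where "K = {(c::complex, r::real). 0 < r \<and> ball c r \<subseteq> U}"
  have "\<exists>i. i \<in> K \<and> x \<in> ball (fst i) (snd i) \<and> snd i < d" if "x \<in> U" "0 < d" for x d
  proof -
    obtain e where "e > 0" "ball x e \<subseteq> U" using U \<open>x \<in> U\<close> open_contains_ball by blast
    then show ?thesis using \<open>0 < d\<close> by (intro exI[of _ "(x, min e (d/2))"]) (auto simp: K_def)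
  qed
  then obtain C where C: "countable C" "C \<subseteq> K"
     "pairwise (\<lambda>i j. disjnt (ball (fst i) (snd i)) (ball (fst j) (snd j))) C"
     "negligible (U - (\<Union>i \<in> C. ball (fst i) (snd i)))"
    using Vitali_covering_theorem_balls[of U K fst snd] by blast
  define B where "B = (\<Union>i \<in> C. ball (fst i) (snd i))"
  have BU: "B \<subseteq> U" using C(2) by (force simp: B_def K_def)
  have disj: "disjoint_family_on (\<lambda>i. ball (fst i) (snd i)) C"
    using C(3) unfolding disjoint_family_on_def pairwise_def disjnt_def by blast
  have "open B" by (auto simp: B_def)
  then have "U - B \<in> sets borel" using U by auto
  then have null: "U - B \<in> null_sets lborel"
    using C(4) by (simp add: B_def negligible_iff_null_sets null_sets_completion_iff[symmetric])
  have "emeasure lborel (T -` B) = (\<integral>\<^sup>+ i. emeasure lborel (T -` ball (fst i) (snd i)) \<partial>count_space C)"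
    unfolding B_def vimage_UN using disj C(1)
  proof (intro emeasure_UN_countable)
    show "disjoint_family_on (\<lambda>i. T -` ball (fst i) (snd i)) C"
      using disj unfolding disjoint_family_on_def by (auto simp flip: vimage_Int)
  qed (auto simp: T_def vimage_rotation_ball[OF l])
  also have "\<dots> = (\<integral>\<^sup>+ i. emeasure lborel (ball (fst i) (snd i)) \<partial>count_space C)"
    using C(2) by (intro nn_integral_cong) (auto simp: T_def vimage_rotation_ball[OF l] emeasure_ball K_def)
  also have "\<dots> = emeasure lborel B"
    unfolding B_def using disj C(1) by (subst emeasure_UN_countable) auto
  finally have TB: "emeasure lborel (T -` B) = emeasure lborel B" .
  have "emeasure lborel (T -` U) = emeasure lborel (T -` B) + emeasure lborel (T -` (U - B))"
    using BU U \<open>open B\<close> T_borel[of B] T_borel[of "U - B"]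
    by (subst plus_emeasure) (auto simp flip: vimage_Un simp: Un_absorb1)
  also have "\<dots> = emeasure lborel B + emeasure lborel (U - B)"
    using TB null null_sets_lborel_vimage_rotation[OF l null] by (simp add: T_def null_setsD1)
  also have "\<dots> = emeasure lborel U"
    using BU U null \<open>open B\<close> by (subst plus_emeasure) (auto simp: Un_absorb1)
  finally show ?thesis by (simp add: T_def)
qed

lemma lborel_distr_rotation:
  assumes l: "cmod l = 1"
  shows "distr lborel borel (\<lambda>w. l * w) = (lborel :: complex measure)"
proof (rule measure_eqI_generator_eq[where E="{S. open S}" and \<Omega>=UNIV and A="\<lambda>i. ball 0 (real i)"])
  fix X :: "complex set" assume "X \<in> {S. open S}"
  then show "emeasure (distr lborel borel ((*) l)) X = emeasure lborel X"
    using emeasure_lborel_vimage_rotation_open[OF l, of X] by (subst emeasure_distr) auto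
next
  fix i :: nat
  show "emeasure (distr lborel borel ((*) l)) (ball 0 (real i)) \<noteq> \<infinity>"
    using emeasure_lborel_vimage_rotation_open[OF l, of "ball 0 (real i)"]
      emeasure_lborel_ball_finite[of "0::complex" "real i"]
    by (subst emeasure_distr) auto
next
  show "(\<Union>i. ball (0::complex) (real i)) = UNIV"
    by (auto intro: reals_Archimedean2)
qed (auto simp: Int_stable_def sets_borel)

section \<open>Integrals over discs\<close>

lemma nn_integral_FTC_Icc_nonneg:
  fixes f F :: "real \<Rightarrow> real"
  assumes "a \<le> b" "\<And>x. a \<le> x \<Longrightarrow> x \<le> b \<Longrightarrow> (F has_real_derivative f x) (at x)"
    "\<And>x. a \<le> x \<Longrightarrow> x \<le> b \<Longrightarrow> 0 \<le> f x"
  shows "(\<integral>\<^sup>+ x. ennreal (f x) * indicator {a..b} x \<partial>lborel) = ennreal (F b - F a)"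
proof (rule nn_integral_has_integral_lebesgue')
  show "(f has_integral F b - F a) {a..b}"
    using assms(1) by (intro fundamental_theorem_of_calculus)
      (auto simp flip: has_real_derivative_iff_has_vector_derivative intro!: DERIV_subset[OF assms(2)])
qed (use assms in auto)

lemma emeasure_annulus:
  "indicator {0..} s * emeasure lborel ({w::complex. s \<le> norm w} \<inter> ball 0 r)
    = ennreal (pi * (r\<^sup>2 - s\<^sup>2)) * indicator {0..r} s"
proof (cases "0 \<le> s \<and> s \<le> r")
  case True
  have "{w::complex. s \<le> norm w} \<inter> ball 0 r = ball 0 r - ball 0 s" by auto
  moreover have "emeasure lborel (ball 0 r - ball (0::complex) s)
      = emeasure lborel (ball (0::complex) r) - emeasure lborel (ball (0::complex) s)"
    using True emeasure_lborel_ball_finite[of "0::complex" s] by (intro emeasure_Diff) auto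
  moreover have "ennreal (pi * r\<^sup>2) - ennreal (pi * s\<^sup>2) = ennreal (pi * (r\<^sup>2 - s\<^sup>2))"
    using True by (subst ennreal_minus) (auto simp: algebra_simps intro!: power_mono)
  ultimately show ?thesis
    using True by (simp add: emeasure_ball unit_ball_vol_2 DIM_complex)
next
  case False
  then consider "s < 0" | "r < s" by linarith
  then show ?thesis
  proof cases
    case 2
    then have empty: "{w::complex. s \<le> norm w} \<inter> ball 0 r = {}" by auto
    show ?thesis unfolding empty using 2 by simp
  qed simp
qed

text \<open>Layer cake for radial functions: writing \<open>\<phi>(|w|)\<close> as the integral of \<open>\<psi>\<close> over
  \<open>0 \<le> s \<le> |w|\<close>, Tonelli turns the inner integral into \<open>\<psi>(s)\<close> times the area of the annulus
  \<open>s \<le> |w| < r\<close>.\<close>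
lemma nn_integral_radial_ball:
  fixes \<phi> \<psi> :: "real \<Rightarrow> real"
  assumes \<psi>: "continuous_on UNIV \<psi>" "\<And>s. 0 \<le> s \<Longrightarrow> 0 \<le> \<psi> s"
    and \<phi>: "\<And>t. 0 \<le> t \<Longrightarrow> (\<integral>\<^sup>+ s. ennreal (\<psi> s) * indicator {0..t} s \<partial>lborel) = ennreal (\<phi> t)"
  shows "(\<integral>\<^sup>+ w. ennreal (\<phi> (norm w)) * indicator (ball (0::complex) r) w \<partial>lborel)
    = (\<integral>\<^sup>+ s. ennreal (\<psi> s * pi * (r\<^sup>2 - s\<^sup>2)) * indicator {0..r} s \<partial>lborel)"
proof -
  define G where "G = (\<lambda>(w::complex) (s::real). ennreal (\<psi> s) * indicator {0..norm w} s * indicator (ball 0 r) w)"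
  have "case_prod G \<in> borel_measurable borel"
  proof -
    have "closed {p :: complex \<times> real. 0 \<le> snd p \<and> snd p \<le> norm (fst p)}"
      by (intro closed_Collect_conj closed_Collect_le continuous_intros continuous_on_snd continuous_on_fst)
    moreover have "open {p :: complex \<times> real. fst p \<in> ball 0 r}"
      unfolding mem_ball by (intro open_Collect_less continuous_intros)
    moreover have "(\<lambda>p::complex \<times> real. \<psi> (snd p)) \<in> borel_measurable borel"
      using \<psi>(1) by (intro borel_measurable_continuous_onI continuous_on_compose2[OF \<psi>(1)] continuous_intros) auto
    moreover have "case_prod G = (\<lambda>p. ennreal (\<psi> (snd p))
        * indicator {p. 0 \<le> snd p \<and> snd p \<le> norm (fst p)} p * indicator {p. fst p \<in> ball 0 r} p)"
      by (auto simp: G_def fun_eq_iff split: split_indicator)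
    ultimately show ?thesis by (auto intro!: borel_measurable_times_ennreal borel_measurable_indicator)
  qed
  then have G_meas: "case_prod G \<in> borel_measurable (lborel \<Otimes>\<^sub>M lborel)"
    by (simp add: measurable_cong_sets[OF sets_pair_measure_cong[OF sets_lborel sets_lborel] refl] lborel_prod)
  have "(\<integral>\<^sup>+ w. ennreal (\<phi> (norm w)) * indicator (ball (0::complex) r) w \<partial>lborel)
        = (\<integral>\<^sup>+ w. (\<integral>\<^sup>+ s. G w s \<partial>lborel) \<partial>lborel)"
  proof (intro nn_integral_cong)
    fix w :: complex
    have [measurable]: "\<psi> \<in> borel_measurable borel" by (rule borel_measurable_continuous_onI[OF \<psi>(1)])
    have "(\<lambda>s. ennreal (\<psi> s) * indicator {0..norm w} s) \<in> borel_measurable lborel" by measurable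
    then show "ennreal (\<phi> (norm w)) * indicator (ball 0 r) w = (\<integral>\<^sup>+ s. G w s \<partial>lborel)"
      unfolding G_def \<phi>[OF norm_ge_zero, symmetric] by (simp add: nn_integral_multc)
  qed
  also have "\<dots> = (\<integral>\<^sup>+ s. (\<integral>\<^sup>+ w. G w s \<partial>lborel) \<partial>lborel)"
    using pair_sigma_finite.Fubini'[OF _ G_meas] by (simp add: pair_sigma_finite_def sigma_finite_lborel)
  also have "\<dots> = (\<integral>\<^sup>+ s. ennreal (\<psi> s * pi * (r\<^sup>2 - s\<^sup>2)) * indicator {0..r} s \<partial>lborel)"
  proof (intro nn_integral_cong)
    fix s :: real
    have "closed {w::complex. s \<le> norm w}" by (intro closed_Collect_le continuous_intros)
    then have "(\<integral>\<^sup>+ w. G w s \<partial>lborel)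
        = ennreal (\<psi> s) * (indicator {0..} s * emeasure lborel ({w::complex. s \<le> norm w} \<inter> ball 0 r))"
      by (subst mult.assoc[symmetric], subst nn_integral_cmult_indicator[symmetric])
         (auto intro!: nn_integral_cong simp: G_def split: split_indicator)
    then show "(\<integral>\<^sup>+ w. G w s \<partial>lborel) = ennreal (\<psi> s * pi * (r\<^sup>2 - s\<^sup>2)) * indicator {0..r} s"
      using \<psi>(2)[of s] by (auto simp: emeasure_annulus ennreal_mult' mult.assoc split: split_indicator)
  qed
  finally show ?thesis .
qed

lemma nn_integral_norm_power_ball:
  fixes r :: real and k :: nat
  assumes r: "r \<ge> 0"
  shows "(\<integral>\<^sup>+ w. ennreal (norm (w::complex) ^ (2*k)) * indicator (ball 0 r) w \<partial>lborel)
         = ennreal (pi * r ^ (2*k+2) / (k+1))"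
proof (cases "k = 0")
  case True
  then show ?thesis using r by (simp add: emeasure_ball unit_ball_vol_2 mult.commute power2_eq_square)
next
  case False
  define c where "c = (\<lambda>s::real. 2 * real k * s ^ (2*k-1))"
  have c_nonneg: "s \<ge> 0 \<Longrightarrow> c s \<ge> 0" for s by (simp add: c_def)
  have "(\<integral>\<^sup>+ w. ennreal (norm (w::complex) ^ (2*k)) * indicator (ball 0 r) w \<partial>lborel)
      = (\<integral>\<^sup>+ s. ennreal (c s * pi * (r\<^sup>2 - s\<^sup>2)) * indicator {0..r} s \<partial>lborel)"
  proof (rule nn_integral_radial_ball[where \<phi>="\<lambda>t. t ^ (2*k)"])
    show "continuous_on UNIV c" unfolding c_def by (intro continuous_intros)
    fix t :: real assume "0 \<le> t"
    then have "(\<integral>\<^sup>+ s. ennreal (c s) * indicator {0..t} s \<partial>lborel) = ennreal (t ^ (2*k) - 0 ^ (2*k))"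
      by (intro nn_integral_FTC_Icc_nonneg[where F="\<lambda>s. s ^ (2*k)"])
         (use False in \<open>auto simp: c_def intro!: derivative_eq_intros\<close>)
    then show "(\<integral>\<^sup>+ s. ennreal (c s) * indicator {0..t} s \<partial>lborel) = ennreal (t ^ (2*k))"
      using False by (simp add: power_0_left)
  qed (rule c_nonneg)
  also have "\<dots> = ennreal (pi * (r\<^sup>2 * r^(2*k) - k / (k + 1) * r^(2*k+2))
                          - pi * (r\<^sup>2 * 0^(2*k) - k / (k + 1) * 0^(2*k+2)))"
  proof (rule nn_integral_FTC_Icc_nonneg[OF r])
    fix x :: real assume x: "0 \<le> x" "x \<le> r"
    show "0 \<le> c x * pi * (r\<^sup>2 - x\<^sup>2)" using x c_nonneg[of x] by (auto intro!: power_mono)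
    have deriv: "((\<lambda>x. pi * (r\<^sup>2 * x^(2*k) - k / (k + 1) * x^(2*k+2))) has_real_derivative
        pi * (r\<^sup>2 * (real (2*k) * x^(2*k-1)) - k / (k + 1) * (real (2*k+2) * x^(2*k+1)))) (at x)"
      using DERIV_cmult[OF DERIV_diff[OF DERIV_cmult[OF DERIV_pow[of "2*k" x], of "r\<^sup>2"]
          DERIV_cmult[OF DERIV_pow[of "2*k+2" x], of "k / (k + 1)"]], of pi]
      by simp
    have "x^(2*k+1) = x^(2*k-1) * x\<^sup>2" using False by (simp flip: power_add)
    then have "pi * (r\<^sup>2 * (real (2*k) * x^(2*k-1)) - k / (k + 1) * (real (2*k+2) * x^(2*k+1)))
        = c x * pi * (r\<^sup>2 - x\<^sup>2)"
      by (simp add: c_def field_simps)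
    with deriv show "((\<lambda>x. pi * (r\<^sup>2 * x^(2*k) - k / (k + 1) * x^(2*k+2)))
        has_real_derivative c x * pi * (r\<^sup>2 - x\<^sup>2)) (at x)"
      by (rule DERIV_cong)
  qed
  also have "\<dots> = ennreal (pi * r ^ (2*k+2) / (k+1))"
    using False by (simp add: field_simps power_add power2_eq_square power_0_left)
  finally show ?thesis .
qed

lemma set_integrable_ball_continuous:
  fixes f :: "complex \<Rightarrow> 'b::{banach, second_countable_topology}"
  assumes "continuous_on (cball 0 r) f"
  shows "set_integrable lborel (ball 0 r) f"
proof -
  have "set_integrable lborel (cball 0 r) f"
    unfolding set_integrable_def by (rule borel_integrable_compact) (use assms in auto)
  then show ?thesis by (rule set_integrable_subset) auto
qed

lemma set_integral_ball_rotation: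
  fixes f :: "complex \<Rightarrow> complex"
  assumes l: "cmod l = 1" and f: "f \<in> borel_measurable borel"
  shows "(LINT w:ball 0 r|lborel. f (l * w)) = (LINT w:ball 0 r|lborel. f w)"
proof -
  define g where "g = (\<lambda>w. indicator (ball 0 r) w *\<^sub>R f w)"
  have g: "g \<in> borel_measurable borel"
    unfolding g_def using f by (intro borel_measurable_scaleR borel_measurable_indicator) auto
  have "(LINT w:ball 0 r|lborel. f w) = integral\<^sup>L (distr lborel borel (\<lambda>w. l * w)) g"
    by (simp add: lborel_distr_rotation[OF l] g_def set_lebesgue_integral_def)
  also have "\<dots> = integral\<^sup>L lborel (\<lambda>w. g (l * w))"
    using g by (intro integral_distr) auto
  also have "\<dots> = (LINT w:ball 0 r|lborel. f (l * w))"
    unfolding set_lebesgue_integral_def g_def using l by (simp add: norm_mult indicator_def)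
  finally show ?thesis ..
qed

lemma exists_unimodular_power_cnj_power_eq_minus_one:
  fixes n m :: nat
  assumes "n \<noteq> m"
  obtains l :: complex where "cmod l = 1" "l ^ n * cnj l ^ m = -1"
proof -
  define a where "a = pi / (real n - real m)"
  have "cis a ^ n * cnj (cis a) ^ m = cis (real n * a) * cis (- (real m * a))"
    by (simp add: cis_cnj Complex.DeMoivre)
  also have "\<dots> = cis ((real n - real m) * a)" by (simp add: cis_mult algebra_simps)
  also have "(real n - real m) * a = pi" using assms by (simp add: a_def)
  finally show ?thesis using that[of "cis a"] by simp
qed

text \<open>For \<open>n \<noteq> k\<close> a rotation by \<open>l\<close> with \<open>l^n cnj l^k = -1\<close> changes the sign of the integral.\<close>
lemma set_integral_ball_power_cnj_power:
  fixes r :: real and n k :: nat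
  assumes r: "r \<ge> 0"
  shows "(LINT w:ball 0 r|lborel. w ^ n * cnj w ^ k)
    = (if n = k then of_real (pi * r ^ (2*k+2) / (k+1)) else 0)"
proof (cases "n = k")
  case True
  have norm_power: "w ^ k * cnj w ^ k = complex_of_real (norm w ^ (2*k))" for w :: complex
    by (simp add: power_mult_distrib[symmetric] power_mult flip: complex_norm_square)
  have "set_integrable lborel (ball 0 r) (\<lambda>w::complex. norm w ^ (2*k))"
    by (intro set_integrable_ball_continuous continuous_intros)
  then have "ennreal (LINT w:ball 0 r|lborel. norm (w::complex) ^ (2*k))
      = (\<integral>\<^sup>+ w. ennreal (indicator (ball 0 r) w * norm (w::complex) ^ (2*k)) \<partial>lborel)"
    unfolding set_lebesgue_integral_def set_integrable_def by (subst nn_integral_eq_integral) auto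
  also have "\<dots> = (\<integral>\<^sup>+ w. ennreal (norm (w::complex) ^ (2*k)) * indicator (ball 0 r) w \<partial>lborel)"
    by (intro nn_integral_cong) (auto simp: indicator_def)
  also have "\<dots> = ennreal (pi * r ^ (2*k+2) / (k+1))" by (rule nn_integral_norm_power_ball[OF r])
  finally have "(LINT w:ball 0 r|lborel. norm (w::complex) ^ (2*k)) = pi * r ^ (2*k+2) / (k+1)"
    using r by (subst (asm) ennreal_inj) (auto simp: set_lebesgue_integral_def intro!: integral_nonneg)
  then have "(LINT w:ball 0 r|lborel. complex_of_real (norm (w::complex) ^ (2*k))) = of_real (pi * r ^ (2*k+2) / (k+1))"
    by (simp only: set_integral_complex_of_real)
  then show ?thesis
    using True by (simp only: norm_power) simp
next
  case False
  obtain l where l: "cmod l = 1" "l ^ n * cnj l ^ k = -1"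
    using exists_unimodular_power_cnj_power_eq_minus_one[OF False] .
  define I where "I = (LINT w:ball 0 r|lborel. w ^ n * cnj w ^ k)"
  have "I = (LINT w:ball 0 r|lborel. (l * w) ^ n * cnj (l * w) ^ k)"
    unfolding I_def
    by (rule set_integral_ball_rotation[OF l(1), symmetric])
       (intro borel_measurable_continuous_onI continuous_intros)
  also have "\<dots> = (LINT w:ball 0 r|lborel. (l ^ n * cnj l ^ k) * (w ^ n * cnj w ^ k))"
    by (simp add: power_mult_distrib mult_ac)
  also have "\<dots> = - I" unfolding l(2) I_def set_lebesgue_integral_def by simp
  finally show ?thesis using False by (simp add: I_def)
qed

lemma sums_set_integral_dominated:
  fixes F :: "nat \<Rightarrow> 'a \<Rightarrow> 'b::{banach, second_countable_topology}"
  assumes F: "\<And>i. set_integrable M A (F i)" and G: "set_integrable M A G"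
    and bound: "\<And>i x. x \<in> A \<Longrightarrow> norm (F i x) \<le> c i * G x" and c: "summable c"
    and S: "\<And>x. x \<in> A \<Longrightarrow> (\<lambda>i. F i x) sums S x"
  shows "(\<lambda>i. LINT x:A|M. F i x) sums (LINT x:A|M. S x)"
proof -
  define F' where "F' = (\<lambda>i x. indicator A x *\<^sub>R F i x)"
  have F'_bound: "norm (F' i x) \<le> c i * (indicator A x * G x)" for i x
    using bound[of x i] by (auto simp: F'_def indicator_def)
  have "summable (\<lambda>i. norm (F' i x))" for x
    by (rule summable_comparison_test[OF _ summable_mult2[OF c]]) (use F'_bound in auto)
  moreover have "summable (\<lambda>i. integral\<^sup>L M (\<lambda>x. norm (F' i x)))"
  proof (rule summable_comparison_test[OF _ summable_mult2[OF c]], intro exI allI impI)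
    fix i
    have "integral\<^sup>L M (\<lambda>x. norm (F' i x)) \<le> integral\<^sup>L M (\<lambda>x. c i * (indicator A x * G x))"
      using F G F'_bound unfolding set_integrable_def F'_def
      by (intro integral_mono integrable_norm integrable_mult_right) auto
    then show "norm (integral\<^sup>L M (\<lambda>x. norm (F' i x))) \<le> c i * (LINT x:A|M. G x)"
      by (simp add: set_lebesgue_integral_def)
  qed
  ultimately have "(\<lambda>i. integral\<^sup>L M (F' i)) sums (\<integral>x. (\<Sum>i. F' i x) \<partial>M)"
    using F unfolding set_integrable_def F'_def by (intro sums_integral) auto
  moreover have "(\<Sum>i. F' i x) = indicator A x *\<^sub>R S x" for x
    using S[of x] by (cases "x \<in> A") (auto simp: F'_def sums_iff)
  ultimately show ?thesis by (simp add: F'_def set_lebesgue_integral_def)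
qed

section \<open>Taylor coefficients\<close>

definition taylor_coeff :: "(complex \<Rightarrow> complex) \<Rightarrow> nat \<Rightarrow> complex" where
  "taylor_coeff h n = (deriv ^^ n) h 0 / fact n"

lemma taylor_coeff_sums:
  assumes "h holomorphic_on disc" "z \<in> disc"
  shows "(\<lambda>n. taylor_coeff h n * z ^ n) sums h z"
  using holomorphic_power_series[OF assms] by (simp add: taylor_coeff_def)

lemma taylor_coeff_unique:
  assumes "\<And>z. z \<in> disc \<Longrightarrow> (\<lambda>n. c n * z ^ n) sums h z"
  shows "taylor_coeff h n = c n"
proof -
  have "summable (\<lambda>n. c n * (1/2) ^ n)" using assms[of "1/2"] sums_summable by auto
  then have "conv_radius c \<ge> ereal (norm (1/2::complex))" by (rule conv_radius_geI)
  then have "fps_conv_radius (Abs_fps c) > 0"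
    unfolding fps_conv_radius_def by (simp add: order_less_le_trans[rotated])
  moreover have "eventually (\<lambda>z. z \<in> disc) (nhds (0::complex))"
    by (rule eventually_nhds_in_open) auto
  then have "eventually (\<lambda>z. eval_fps (Abs_fps c) z = h z) (nhds 0)"
    by eventually_elim (use assms in \<open>auto simp: eval_fps_def sums_iff\<close>)
  ultimately have "h has_fps_expansion Abs_fps c" by (simp add: has_fps_expansion_def)
  from fps_nth_fps_expansion[OF this, of n] show ?thesis by (simp add: taylor_coeff_def)
qed

lemma taylor_coeff_0 [simp]: "taylor_coeff h 0 = h 0"
  by (simp add: taylor_coeff_def)

lemma taylor_coeff_deriv: "taylor_coeff (deriv h) n = of_nat (Suc n) * taylor_coeff h (Suc n)"
proof -
  have "(deriv ^^ n) (deriv h) = (deriv ^^ Suc n) h"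
    by (simp only: funpow_Suc_right o_def)
  then show ?thesis by (simp add: taylor_coeff_def fact_Suc field_simps del: of_nat_Suc)
qed

lemma taylor_coeff_add:
  assumes "f holomorphic_on disc" "g holomorphic_on disc"
  shows "taylor_coeff (\<lambda>z. f z + g z) n = taylor_coeff f n + taylor_coeff g n"
  by (rule taylor_coeff_unique)
     (use sums_add[OF taylor_coeff_sums[OF assms(1)] taylor_coeff_sums[OF assms(2)]] in
      \<open>simp add: distrib_right\<close>)

lemma taylor_coeff_cmult:
  assumes "f holomorphic_on disc"
  shows "taylor_coeff (\<lambda>z. c * f z) n = c * taylor_coeff f n"
  by (rule taylor_coeff_unique)
     (use sums_mult[OF taylor_coeff_sums[OF assms], of _ c] in \<open>simp add: mult.assoc\<close>)

lemma taylor_coeff_rotation: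
  assumes "f holomorphic_on disc" "cmod l = 1"
  shows "taylor_coeff (rot l f) n = l ^ n * taylor_coeff f n"
proof (rule taylor_coeff_unique)
  fix z :: complex assume "z \<in> disc"
  then have "l * z \<in> disc" using assms(2) by (simp add: norm_mult)
  from taylor_coeff_sums[OF assms(1) this]
  show "(\<lambda>n. (l ^ n * taylor_coeff f n) * z ^ n) sums rot l f z"
    by (simp add: rot_def power_mult_distrib mult_ac)
qed

lemma summable_norm_taylor_coeff:
  fixes z :: complex
  assumes "h holomorphic_on disc" "norm z < 1"
  shows "summable (\<lambda>n. norm (taylor_coeff h n) * norm z ^ n)"
proof -
  define x where "x = complex_of_real ((1 + norm z) / 2)"
  have x: "norm x = (1 + norm z) / 2" unfolding x_def by (subst norm_of_real) simp
  then have "summable (\<lambda>n. taylor_coeff h n * x ^ n)"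
    using assms taylor_coeff_sums[OF assms(1), of x] sums_summable by auto
  moreover have "norm z < norm x" using assms(2) x by simp
  ultimately have "summable (\<lambda>n. norm (taylor_coeff h n * z ^ n))" by (rule powser_insidea)
  then show ?thesis by (simp add: norm_mult norm_power)
qed

text \<open>Only the \<open>k\<close>-th Taylor term survives, by the orthogonality of the monomials.\<close>
lemma set_integral_ball_holomorphic_cnj_power:
  assumes h: "h holomorphic_on disc" and r: "0 \<le> r" "r < 1"
  shows "(LINT w:ball 0 r|lborel. h w * cnj w ^ k) = of_real (pi * r^(2*k+2) / (k+1)) * taylor_coeff h k"
proof -
  define C where "C = complex_of_real (pi * r^(2*k+2) / (k+1))"
  have "(\<lambda>i. LINT w:ball 0 r|lborel. taylor_coeff h i * w ^ i * cnj w ^ k)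
      sums (LINT w:ball 0 r|lborel. h w * cnj w ^ k)"
  proof (rule sums_set_integral_dominated[where G="\<lambda>_. 1" and c="\<lambda>i. norm (taylor_coeff h i) * r ^ i * r ^ k"])
    show "summable (\<lambda>i. norm (taylor_coeff h i) * r ^ i * r ^ k)"
      using summable_norm_taylor_coeff[OF h, of "of_real r"] r by (intro summable_mult2) (simp add: norm_of_real)
    fix i and w :: complex assume w: "w \<in> ball 0 r"
    then show "norm (taylor_coeff h i * w ^ i * cnj w ^ k) \<le> norm (taylor_coeff h i) * r ^ i * r ^ k * 1"
      using r by (simp add: norm_mult norm_power) (auto intro!: mult_mono power_mono mult_nonneg_nonneg)
    show "(\<lambda>i. taylor_coeff h i * w ^ i * cnj w ^ k) sums (h w * cnj w ^ k)"
      using w r taylor_coeff_sums[OF h, of w] by (intro sums_mult2) auto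
  qed (auto intro!: set_integrable_ball_continuous continuous_intros)
  moreover have "(LINT w:ball 0 r|lborel. taylor_coeff h i * w ^ i * cnj w ^ k)
      = (if i = k then taylor_coeff h k * C else 0)" for i
    using set_integral_ball_power_cnj_power[OF r(1), of i k] by (simp add: mult.assoc C_def)
  ultimately have "(\<lambda>i. if i = k then taylor_coeff h k * C else 0) sums (LINT w:ball 0 r|lborel. h w * cnj w ^ k)"
    by simp
  then show ?thesis
    using sums_single[of k "\<lambda>_. taylor_coeff h k * C"] by (simp add: sums_unique2 C_def mult.commute)
qed

section \<open>The Dirichlet space\<close>

lemma
  assumes "f \<in> dirichlet_space"
  shows dirichlet_space_holomorphic: "f holomorphic_on disc"
    and dirichlet_space_outside: "z \<notin> disc \<Longrightarrow> f z = 0"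
    and dirichlet_space_integrable: "set_integrable lborel disc (\<lambda>z. (cmod (deriv f z))\<^sup>2)"
  using assms by (auto simp: dirichlet_space_def)

lemma set_integrable_disc_const: "set_integrable lborel disc (\<lambda>_. c :: real)"
  by (intro set_integrable_ball_continuous continuous_intros)

lemma dirichlet_spaceI:
  assumes h: "h holomorphic_on disc" and out: "\<And>z. z \<notin> disc \<Longrightarrow> h z = 0"
    and G: "set_integrable lborel disc G" and bound: "\<And>w. w \<in> disc \<Longrightarrow> (cmod (deriv h w))\<^sup>2 \<le> G w"
  shows "h \<in> dirichlet_space"
proof -
  have "continuous_on disc (\<lambda>w. (cmod (deriv h w))\<^sup>2)"
    using h by (intro continuous_intros holomorphic_on_imp_continuous_on holomorphic_deriv) auto
  then have "(\<lambda>w. indicator disc w *\<^sub>R (cmod (deriv h w))\<^sup>2) \<in> borel_measurable borel"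
    by (intro borel_measurable_continuous_on_indicator) auto
  then have "set_borel_measurable lborel disc (\<lambda>w. (cmod (deriv h w))\<^sup>2)"
    by (simp add: set_borel_measurable_def)
  then have "set_integrable lborel disc (\<lambda>w. (cmod (deriv h w))\<^sup>2)"
    using bound order_trans[OF zero_le_power2 bound]
    by (intro set_integrable_bound[OF G]) (auto intro!: AE_I2)
  then show ?thesis using h out by (simp add: dirichlet_space_def)
qed

lemma dirichlet_space_add:
  assumes f: "f \<in> dirichlet_space" and g: "g \<in> dirichlet_space"
  shows "(\<lambda>z. f z + g z) \<in> dirichlet_space"
proof (rule dirichlet_spaceI[where G="\<lambda>w. 2 * (cmod (deriv f w))\<^sup>2 + 2 * (cmod (deriv g w))\<^sup>2"])
  show "(\<lambda>z. f z + g z) holomorphic_on disc"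
    using f g by (intro holomorphic_on_add dirichlet_space_holomorphic)
  show "set_integrable lborel disc (\<lambda>w. 2 * (cmod (deriv f w))\<^sup>2 + 2 * (cmod (deriv g w))\<^sup>2)"
    using f g by (intro set_integral_add set_integrable_mult_right dirichlet_space_integrable)
  fix w :: complex assume w: "w \<in> disc"
  then have "f field_differentiable at w" "g field_differentiable at w"
    using f g by (auto intro: holomorphic_on_imp_differentiable_at dirichlet_space_holomorphic)
  then have "deriv (\<lambda>z. f z + g z) w = deriv f w + deriv g w" by simp
  moreover have "(cmod (a + b))\<^sup>2 \<le> 2 * (cmod a)\<^sup>2 + 2 * (cmod b)\<^sup>2" for a b :: complex
  proof -
    have "(cmod (a + b))\<^sup>2 \<le> (cmod a + cmod b)\<^sup>2" by (intro power_mono norm_triangle_ineq) auto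
    also have "\<dots> \<le> 2 * (cmod a)\<^sup>2 + 2 * (cmod b)\<^sup>2"
      using sum_squares_bound[of "cmod a" "cmod b"] by (simp add: power2_eq_square algebra_simps)
    finally show ?thesis .
  qed
  ultimately show "(cmod (deriv (\<lambda>z. f z + g z) w))\<^sup>2 \<le> 2 * (cmod (deriv f w))\<^sup>2 + 2 * (cmod (deriv g w))\<^sup>2"
    by simp
qed (use f g in \<open>auto simp: dirichlet_space_outside\<close>)

lemma dirichlet_space_cmult:
  assumes f: "f \<in> dirichlet_space"
  shows "(\<lambda>z. c * f z) \<in> dirichlet_space"
proof (rule dirichlet_spaceI[where G="\<lambda>w. (cmod c)\<^sup>2 * (cmod (deriv f w))\<^sup>2"])
  show "(\<lambda>z. c * f z) holomorphic_on disc"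
    using f by (intro holomorphic_on_mult holomorphic_on_const dirichlet_space_holomorphic)
  show "set_integrable lborel disc (\<lambda>w. (cmod c)\<^sup>2 * (cmod (deriv f w))\<^sup>2)"
    using f by (intro set_integrable_mult_right dirichlet_space_integrable)
  fix w :: complex assume w: "w \<in> disc"
  then have "f field_differentiable at w"
    using f by (auto intro: holomorphic_on_imp_differentiable_at dirichlet_space_holomorphic)
  then show "(cmod (deriv (\<lambda>z. c * f z) w))\<^sup>2 \<le> (cmod c)\<^sup>2 * (cmod (deriv f w))\<^sup>2"
    by (simp add: norm_mult power_mult_distrib)
qed (use f in \<open>auto simp: dirichlet_space_outside\<close>)

lemma dirichlet_space_rotation:
  assumes f: "f \<in> dirichlet_space" and l: "cmod l = 1"
  shows "rot l f \<in> dirichlet_space"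
proof (rule dirichlet_spaceI[where G="\<lambda>w. (cmod (deriv f (l * w)))\<^sup>2"])
  have lw: "l * w \<in> disc \<longleftrightarrow> w \<in> disc" for w by (simp add: norm_mult l)
  have "(f \<circ> (\<lambda>w. l * w)) holomorphic_on disc"
    using lw by (intro holomorphic_on_compose_gen[OF _ dirichlet_space_holomorphic[OF f]] holomorphic_intros) auto
  then show "rot l f holomorphic_on disc" by (simp add: rot_def o_def)
  show "\<And>z. z \<notin> disc \<Longrightarrow> rot l f z = 0" using dirichlet_space_outside[OF f] lw by (simp add: rot_def)
  show "set_integrable lborel disc (\<lambda>w. (cmod (deriv f (l * w)))\<^sup>2)"
  proof -
    define G where "G = (\<lambda>w. indicator disc w *\<^sub>R (cmod (deriv f w))\<^sup>2)"
    have "continuous_on disc (\<lambda>w. (cmod (deriv f w))\<^sup>2)"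
      using dirichlet_space_holomorphic[OF f]
      by (intro continuous_intros holomorphic_on_imp_continuous_on holomorphic_deriv) auto
    then have "G \<in> borel_measurable borel"
      unfolding G_def by (intro borel_measurable_continuous_on_indicator) auto
    moreover have "integrable lborel G"
      using dirichlet_space_integrable[OF f] unfolding set_integrable_def G_def .
    then have "integrable (distr lborel borel (\<lambda>w. l * w)) G" by (simp add: lborel_distr_rotation[OF l])
    ultimately have "integrable lborel (\<lambda>w. G (l * w))"
      by (subst (asm) integrable_distr_eq) auto
    then show ?thesis unfolding set_integrable_def G_def
      by (simp add: lw indicator_def norm_mult l)
  qed
  fix w :: complex assume "w \<in> disc"
  then have "(f has_field_derivative deriv f (l * w)) (at (l * w))"
    using dirichlet_space_holomorphic[OF f] lw
    by (auto intro!: DERIV_deriv_iff_field_differentiable[THEN iffD2] holomorphic_on_imp_differentiable_at)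
  then have "((\<lambda>z. f (l * z)) has_field_derivative deriv f (l * w) * l) (at w)"
    using DERIV_chain2[of f "deriv f (l * w)" "\<lambda>z. l * z" w l] by (auto intro!: derivative_eq_intros)
  then have "deriv (rot l f) w = deriv f (l * w) * l" unfolding rot_def by (rule DERIV_imp_deriv)
  then show "(cmod (deriv (rot l f) w))\<^sup>2 \<le> (cmod (deriv f (l * w)))\<^sup>2" by (simp add: norm_mult l)
qed

text \<open>Elements of the Dirichlet space vanish off the disc, so the monomials have to be cut off.\<close>
definition disc_monomial :: "nat \<Rightarrow> complex \<Rightarrow> complex" where
  "disc_monomial m z = (if z \<in> disc then z ^ m else 0)"

lemma disc_monomial_holomorphic: "disc_monomial m holomorphic_on disc"
  by (rule holomorphic_transform[of "\<lambda>z. z ^ m"]) (auto simp: disc_monomial_def intro: holomorphic_intros)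

lemma disc_monomial_in_dirichlet_space: "disc_monomial m \<in> dirichlet_space"
proof (rule dirichlet_spaceI[where G="\<lambda>w. (real m)\<^sup>2"])
  fix w :: complex assume w: "w \<in> disc"
  have "eventually (\<lambda>z. disc_monomial m z = z ^ m) (nhds w)"
    using eventually_nhds_in_open[of disc w] w by (auto elim!: eventually_mono simp: disc_monomial_def)
  then have "deriv (disc_monomial m) w = of_nat m * w ^ (m - 1)"
    by (subst deriv_cong_ev[OF _ refl]) (auto intro!: DERIV_imp_deriv derivative_eq_intros)
  then have "cmod (deriv (disc_monomial m) w) \<le> real m"
    using w by (simp add: norm_mult norm_power power_le_one mult_left_le)
  then show "(cmod (deriv (disc_monomial m) w))\<^sup>2 \<le> (real m)\<^sup>2" by (intro power_mono) auto
qed (auto simp: disc_monomial_def disc_monomial_holomorphic set_integrable_disc_const)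

lemma taylor_coeff_disc_monomial: "taylor_coeff (disc_monomial m) n = (if n = m then 1 else 0)"
proof (rule taylor_coeff_unique)
  fix z :: complex assume "z \<in> disc"
  have "(\<lambda>n. (if n = m then 1 else 0) * z ^ n) = (\<lambda>n. if n = m then z ^ m else 0)" by auto
  then show "(\<lambda>n. (if n = m then 1 else 0) * z ^ n) sums disc_monomial m z"
    using sums_single[of m "\<lambda>_. z ^ m"] \<open>z \<in> disc\<close> by (simp add: disc_monomial_def)
qed

lemma set_integrable_disc_deriv:
  assumes f: "f \<in> dirichlet_space"
  shows "set_integrable lborel disc (deriv f)"
proof (rule set_integrable_bound[where f="\<lambda>w. 1 + (cmod (deriv f w))\<^sup>2"])
  show "set_integrable lborel disc (\<lambda>w. 1 + (cmod (deriv f w))\<^sup>2)"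
    using f by (intro set_integral_add set_integrable_disc_const dirichlet_space_integrable)
  have "continuous_on disc (deriv f)"
    using dirichlet_space_holomorphic[OF f] by (intro holomorphic_on_imp_continuous_on holomorphic_deriv) auto
  then have "(\<lambda>w. indicator disc w *\<^sub>R deriv f w) \<in> borel_measurable borel"
    by (intro borel_measurable_continuous_on_indicator) auto
  then show "set_borel_measurable lborel disc (deriv f)" by (simp add: set_borel_measurable_def)
  have "t \<le> 1 + t\<^sup>2" if "0 \<le> t" for t :: real
    using sum_squares_bound[of 1 t] that by (simp add: power2_eq_square algebra_simps)
  then show "AE w in lborel. w \<in> disc \<longrightarrow> norm (deriv f w) \<le> norm (1 + (cmod (deriv f w))\<^sup>2)"
    by (intro AE_I2) auto
qed

lemma set_integrable_disc_deriv_mult_bounded: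
  assumes f: "f \<in> dirichlet_space" and phi: "continuous_on disc phi"
    and K: "\<And>w. w \<in> disc \<Longrightarrow> norm (phi w) \<le> K"
  shows "set_integrable lborel disc (\<lambda>w. deriv f w * phi w)"
proof (rule set_integrable_bound[where f="\<lambda>w. of_real K * deriv f w"])
  show "set_integrable lborel disc (\<lambda>w. of_real K * deriv f w)"
    using set_integrable_disc_deriv[OF f] by (rule set_integrable_mult_right)
  have "continuous_on disc (\<lambda>w. deriv f w * phi w)"
    using dirichlet_space_holomorphic[OF f]
    by (intro continuous_on_mult[OF _ phi] holomorphic_on_imp_continuous_on holomorphic_deriv) auto
  then have "(\<lambda>w. indicator disc w *\<^sub>R (deriv f w * phi w)) \<in> borel_measurable borel"
    by (intro borel_measurable_continuous_on_indicator) auto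
  then show "set_borel_measurable lborel disc (\<lambda>w. deriv f w * phi w)" by (simp add: set_borel_measurable_def)
  have "K \<ge> 0" using K[of 0] norm_ge_zero[of "phi 0"] by (simp del: norm_ge_zero)
  then show "AE w in lborel. w \<in> disc \<longrightarrow> norm (deriv f w * phi w) \<le> norm (of_real K * deriv f w)"
    using K by (intro AE_I2) (auto simp: norm_mult mult.commute intro!: mult_right_mono)
qed

lemma tendsto_set_integral_balls_disc:
  fixes f :: "complex \<Rightarrow> 'b::{banach, second_countable_topology}"
  assumes "set_integrable lborel disc f"
  shows "(\<lambda>i. LINT w:ball 0 (real i / real (Suc i))|lborel. f w) \<longlonglongrightarrow> (LINT w:disc|lborel. f w)"
proof -
  define \<rho> where "\<rho> = (\<lambda>i::nat. real i / real (Suc i))"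
  have "incseq (\<lambda>i. ball (0::complex) (\<rho> i))"
    by (intro incseq_SucI subset_ball) (simp add: \<rho>_def field_simps)
  moreover have "(\<Union>i. ball (0::complex) (\<rho> i)) = disc"
  proof (intro set_eqI iffI)
    fix w :: complex assume "w \<in> disc"
    then have "eventually (\<lambda>i. norm w < \<rho> i) sequentially"
      using order_tendstoD(1)[OF LIMSEQ_n_over_Suc_n] by (simp add: \<rho>_def)
    then obtain i where "norm w < \<rho> i" by (meson eventually_sequentially order.refl)
    then show "w \<in> (\<Union>i. ball 0 (\<rho> i))" by auto
  next
    fix w :: complex assume "w \<in> (\<Union>i. ball 0 (\<rho> i))"
    then obtain i where "norm w < \<rho> i" by auto
    moreover have "\<rho> i < 1" by (simp add: \<rho>_def)
    ultimately show "w \<in> disc" by simp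
  qed
  ultimately show ?thesis
    using set_integral_cont_up[of "\<lambda>i. ball 0 (\<rho> i)" lborel f] assms by (simp add: \<rho>_def)
qed

lemma set_integral_disc_deriv_cnj_power:
  assumes f: "f \<in> dirichlet_space"
  shows "(LINT w:disc|lborel. deriv f w * cnj w ^ k) = pi * taylor_coeff f (Suc k)"
proof -
  define \<rho> where "\<rho> = (\<lambda>i::nat. real i / real (Suc i))"
  have "set_integrable lborel disc (\<lambda>w. deriv f w * cnj w ^ k)"
    by (rule set_integrable_disc_deriv_mult_bounded[OF f, where K=1])
       (auto intro!: continuous_intros simp: norm_power power_le_one)
  then have "(\<lambda>i. LINT w:ball 0 (\<rho> i)|lborel. deriv f w * cnj w ^ k) \<longlonglongrightarrow> (LINT w:disc|lborel. deriv f w * cnj w ^ k)"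
    unfolding \<rho>_def by (rule tendsto_set_integral_balls_disc)
  moreover have "(\<lambda>i. LINT w:ball 0 (\<rho> i)|lborel. deriv f w * cnj w ^ k)
      = (\<lambda>i. of_real (pi * \<rho> i ^ (2*k+2) / (k+1)) * taylor_coeff (deriv f) k)"
    using dirichlet_space_holomorphic[OF f]
    by (intro ext set_integral_ball_holomorphic_cnj_power holomorphic_deriv) (auto simp: \<rho>_def)
  moreover have "\<dots> \<longlonglongrightarrow> of_real (pi * 1 ^ (2*k+2) / (k+1)) * taylor_coeff (deriv f) k"
    unfolding \<rho>_def by (intro tendsto_intros LIMSEQ_n_over_Suc_n) auto
  ultimately have "(LINT w:disc|lborel. deriv f w * cnj w ^ k) = of_real (pi / (k+1)) * taylor_coeff (deriv f) k"
    using LIMSEQ_unique by fastforce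
  then show ?thesis by (simp add: taylor_coeff_deriv field_simps del: of_nat_Suc)
qed

lemma nonneg_sums_of_power_sums_tendsto:
  fixes c :: "nat \<Rightarrow> real"
  assumes c: "\<And>k. 0 \<le> c k" and r: "\<And>i. 0 \<le> r i" "\<And>i. r i \<le> 1" "r \<longlonglongrightarrow> 1"
    and S: "\<And>i. (\<lambda>k. c k * r i ^ k) sums S i" and L: "S \<longlonglongrightarrow> L"
  shows "c sums L"
proof -
  have partial: "(\<Sum>k<N. c k) \<le> L" for N
  proof (rule LIMSEQ_le[OF _ L])
    show "(\<lambda>i. \<Sum>k<N. c k * r i ^ k) \<longlonglongrightarrow> (\<Sum>k<N. c k)"
      using tendsto_sum[of "{..<N}" "\<lambda>k i. c k * r i ^ k"] r(3) by (auto intro!: tendsto_eq_intros)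
    show "\<exists>M. \<forall>i\<ge>M. (\<Sum>k<N. c k * r i ^ k) \<le> S i"
    proof (intro exI allI impI)
      fix i
      show "(\<Sum>k<N. c k * r i ^ k) \<le> S i"
        using sum_le_suminf[OF sums_summable[OF S[of i]], of "{..<N}"] sums_unique[OF S[of i]] c r(1)
        by auto
    qed
  qed
  have "summable c"
  proof (rule bounded_imp_summable[where B=L])
    show "(\<Sum>k\<le>n. c k) \<le> L" for n using partial[of "Suc n"] by (simp only: lessThan_Suc_atMost)
  qed (use c in auto)
  moreover have "S i \<le> suminf c" for i
  proof -
    have "c k * r i ^ k \<le> c k" for k
      using c r(1,2) by (intro mult_left_le power_le_one) auto
    then have "(\<Sum>k. c k * r i ^ k) \<le> suminf c"
      using S[of i] \<open>summable c\<close> by (intro suminf_le) (auto simp: sums_iff)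
    then show ?thesis using S[of i] by (simp add: sums_iff)
  qed
  then have "L \<le> suminf c" using LIMSEQ_le_const2[OF L] by auto
  ultimately show ?thesis
    using suminf_le_const[OF _ partial] by (simp add: sums_iff order_antisym)
qed

lemma set_integral_ball_deriv_mult_cnj_taylor_term:
  assumes f: "f holomorphic_on disc" and r: "0 \<le> r" "r < 1"
  shows "(LINT w:ball 0 r|lborel. deriv f w * (cnj (taylor_coeff (deriv f) k) * cnj w ^ k))
    = of_real (pi * (real (Suc k) * (cmod (taylor_coeff f (Suc k)))\<^sup>2 * (r\<^sup>2) ^ Suc k))"
proof -
  have fd: "deriv f holomorphic_on disc" using f by (rule holomorphic_deriv) auto
  define b where "b = taylor_coeff (deriv f)"
  have "(LINT w:ball 0 r|lborel. deriv f w * (cnj (b k) * cnj w ^ k))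
      = cnj (b k) * (LINT w:ball 0 r|lborel. deriv f w * cnj w ^ k)"
    by (simp add: mult_ac)
  also have "\<dots> = of_real (pi * r^(2*k+2) / (k+1)) * (b k * cnj (b k))"
    using set_integral_ball_holomorphic_cnj_power[OF fd r] by (simp add: b_def mult_ac)
  also have "\<dots> = of_real (pi * r^(2*k+2) / (k+1) * (cmod (b k))\<^sup>2)"
    by (simp flip: complex_norm_square)
  also have "(cmod (b k))\<^sup>2 = (real (Suc k))\<^sup>2 * (cmod (taylor_coeff f (Suc k)))\<^sup>2"
    by (simp add: b_def taylor_coeff_deriv norm_mult power_mult_distrib del: of_nat_Suc)
  also have "pi * r^(2*k+2) / (k+1) * ((real (Suc k))\<^sup>2 * (cmod (taylor_coeff f (Suc k)))\<^sup>2)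
      = pi * (real (Suc k) * (cmod (taylor_coeff f (Suc k)))\<^sup>2 * (r\<^sup>2) ^ Suc k)"
    by (simp add: power2_eq_square power_mult field_simps del: of_nat_Suc)
  finally show ?thesis by (simp add: b_def)
qed

lemma sums_set_integral_ball_norm_deriv_square:
  assumes f: "f holomorphic_on disc" and r: "0 \<le> r" "r < 1"
  shows "(\<lambda>n. real n * (cmod (taylor_coeff f n))\<^sup>2 * (r\<^sup>2) ^ n)
    sums ((LINT w:ball 0 r|lborel. (cmod (deriv f w))\<^sup>2) / pi)"
proof -
  have fd: "deriv f holomorphic_on disc" using f by (rule holomorphic_deriv) auto
  define b where "b = taylor_coeff (deriv f)"
  have cont: "continuous_on (cball 0 r) (deriv f)"
    using r by (intro holomorphic_on_imp_continuous_on holomorphic_on_subset[OF fd]) auto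
  obtain M where M: "\<And>w. w \<in> cball 0 r \<Longrightarrow> norm (deriv f w) \<le> M"
    using compact_imp_bounded[OF compact_continuous_image[OF cont compact_cball]]
    unfolding bounded_iff by blast
  have "(\<lambda>k. LINT w:ball 0 r|lborel. deriv f w * (cnj (b k) * cnj w ^ k))
      sums (LINT w:ball 0 r|lborel. deriv f w * cnj (deriv f w))"
  proof (rule sums_set_integral_dominated[where G="\<lambda>_. 1" and c="\<lambda>k. M * (norm (b k) * r ^ k)"])
    show "summable (\<lambda>k. M * (norm (b k) * r ^ k))"
      using summable_norm_taylor_coeff[OF fd, of "of_real r"] r
      unfolding b_def by (intro summable_mult) (simp add: norm_of_real)
    fix k and w :: complex assume w: "w \<in> ball 0 r"
    then have "norm (cnj (b k) * cnj w ^ k) \<le> norm (b k) * r ^ k"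
      by (simp add: norm_mult norm_power) (auto intro!: mult_left_mono power_mono)
    then show "norm (deriv f w * (cnj (b k) * cnj w ^ k)) \<le> M * (norm (b k) * r ^ k) * 1"
      using M[of w] w unfolding norm_mult[of "deriv f w"]
      by (auto intro!: mult_mono intro: order_trans[OF norm_ge_zero])
    have "(\<lambda>k. b k * w ^ k) sums deriv f w"
      using w r taylor_coeff_sums[OF fd, of w] by (simp add: b_def)
    then have "(\<lambda>k. cnj (b k * w ^ k)) sums cnj (deriv f w)" by (simp only: sums_cnj)
    then show "(\<lambda>k. deriv f w * (cnj (b k) * cnj w ^ k)) sums (deriv f w * cnj (deriv f w))"
      by (intro sums_mult) simp
  qed (use cont in \<open>auto intro!: set_integrable_ball_continuous continuous_intros\<close>)
  moreover have "(LINT w:ball 0 r|lborel. deriv f w * (cnj (b k) * cnj w ^ k))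
      = of_real (pi * (real (Suc k) * (cmod (taylor_coeff f (Suc k)))\<^sup>2 * (r\<^sup>2) ^ Suc k))" for k
    unfolding b_def by (rule set_integral_ball_deriv_mult_cnj_taylor_term[OF f r])
  moreover have "(LINT w:ball 0 r|lborel. deriv f w * cnj (deriv f w))
      = of_real (LINT w:ball 0 r|lborel. (cmod (deriv f w))\<^sup>2)"
    by (simp flip: complex_norm_square set_integral_complex_of_real)
  ultimately have "(\<lambda>k. pi * (real (Suc k) * (cmod (taylor_coeff f (Suc k)))\<^sup>2 * (r\<^sup>2) ^ Suc k))
      sums (LINT w:ball 0 r|lborel. (cmod (deriv f w))\<^sup>2)"
    by (simp only: sums_of_real_iff)
  then have "(\<lambda>n. pi * (real n * (cmod (taylor_coeff f n))\<^sup>2 * (r\<^sup>2) ^ n))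
      sums (LINT w:ball 0 r|lborel. (cmod (deriv f w))\<^sup>2)"
    using sums_Suc_iff[of "\<lambda>n. pi * (real n * (cmod (taylor_coeff f n))\<^sup>2 * (r\<^sup>2) ^ n)"] by simp
  then show ?thesis by (auto dest: sums_divide[where c=pi])
qed

lemma dirichlet_parseval:
  assumes f: "f \<in> dirichlet_space"
  shows "(\<lambda>n. real n * (cmod (taylor_coeff f n))\<^sup>2) sums ((LINT w:disc|lborel. (cmod (deriv f w))\<^sup>2) / pi)"
proof (rule nonneg_sums_of_power_sums_tendsto)
  define \<rho> where "\<rho> = (\<lambda>i::nat. real i / real (Suc i))"
  show "(\<lambda>i. (\<rho> i)\<^sup>2) \<longlonglongrightarrow> 1"
    using tendsto_power[OF LIMSEQ_n_over_Suc_n, of 2] by (simp add: \<rho>_def)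
  show "(\<lambda>k. real k * (cmod (taylor_coeff f k))\<^sup>2 * ((\<rho> i)\<^sup>2) ^ k)
      sums ((LINT w:ball 0 (\<rho> i)|lborel. (cmod (deriv f w))\<^sup>2) / pi)" for i
    using dirichlet_space_holomorphic[OF f] by (rule sums_set_integral_ball_norm_deriv_square) (auto simp: \<rho>_def)
  show "(\<lambda>i. (LINT w:ball 0 (\<rho> i)|lborel. (cmod (deriv f w))\<^sup>2) / pi)
      \<longlonglongrightarrow> (LINT w:disc|lborel. (cmod (deriv f w))\<^sup>2) / pi"
    unfolding \<rho>_def using dirichlet_space_integrable[OF f]
    by (intro tendsto_divide tendsto_set_integral_balls_disc tendsto_const) auto
qed (auto simp: power_le_one)

lemma
  assumes f: "f \<in> dirichlet_space"
  shows dnorm_square: "(dnorm f)\<^sup>2 = (cmod (f 0))\<^sup>2 + (\<Sum>n. real n * (cmod (taylor_coeff f n))\<^sup>2)"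
    and summable_dnorm_series: "summable (\<lambda>n. real n * (cmod (taylor_coeff f n))\<^sup>2)"
proof -
  note parseval = dirichlet_parseval[OF f]
  have "0 \<le> (LINT w:disc|lborel. (cmod (deriv f w))\<^sup>2) / pi"
    using sums_le[OF _ sums_zero parseval] by simp
  then show "(dnorm f)\<^sup>2 = (cmod (f 0))\<^sup>2 + (\<Sum>n. real n * (cmod (taylor_coeff f n))\<^sup>2)"
    using parseval unfolding dnorm_def by (simp add: sums_iff)
  show "summable (\<lambda>n. real n * (cmod (taylor_coeff f n))\<^sup>2)" using parseval by (rule sums_summable)
qed

lemma dnorm_nonneg: "dnorm f \<ge> 0"
proof -
  have "0 \<le> (LINT z:disc|lborel. (cmod (deriv f z))\<^sup>2)"
    unfolding set_lebesgue_integral_def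
    by (intro Bochner_Integration.integral_nonneg) (auto simp: indicator_def)
  then show ?thesis unfolding dnorm_def by simp
qed

lemma dnorm_eqI:
  assumes "f \<in> dirichlet_space" "0 \<le> c" "c\<^sup>2 = (cmod (f 0))\<^sup>2 + (\<Sum>n. real n * (cmod (taylor_coeff f n))\<^sup>2)"
  shows "dnorm f = c"
  using assms dnorm_square[OF assms(1)] dnorm_nonneg[of f] power2_eq_iff_nonneg[of "dnorm f" c]
  by simp

lemma dnorm_cmult:
  assumes f: "f \<in> dirichlet_space"
  shows "dnorm (\<lambda>z. c * f z) = cmod c * dnorm f"
proof (rule dnorm_eqI[OF dirichlet_space_cmult[OF f]])
  show "(cmod c * dnorm f)\<^sup>2 = (cmod (c * f 0))\<^sup>2 + (\<Sum>n. real n * (cmod (taylor_coeff (\<lambda>z. c * f z) n))\<^sup>2)"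
    using suminf_mult[OF summable_dnorm_series[OF f], of "(cmod c)\<^sup>2"] dnorm_square[OF f]
    by (simp add: taylor_coeff_cmult[OF dirichlet_space_holomorphic[OF f]] norm_mult
        power_mult_distrib algebra_simps)
qed (simp add: dnorm_nonneg)

lemma dnorm_disc_monomial: "(dnorm (disc_monomial m))\<^sup>2 = mono_norm_sq m"
proof -
  have "(\<lambda>n. real n * (cmod (taylor_coeff (disc_monomial m) n))\<^sup>2) = (\<lambda>n. if n = m then real m else 0)"
    by (simp add: taylor_coeff_disc_monomial fun_eq_iff)
  then have "(\<lambda>n. real n * (cmod (taylor_coeff (disc_monomial m) n))\<^sup>2) sums real m"
    using sums_single[of m "\<lambda>_. real m"] by simp
  then show ?thesis using dnorm_square[OF disc_monomial_in_dirichlet_space[of m]]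
    by (simp add: sums_iff disc_monomial_def mono_norm_sq_def)
qed

lemma norm_taylor_coeff_le_dnorm:
  assumes f: "f \<in> dirichlet_space"
  shows "cmod (taylor_coeff f n) \<le> dnorm f"
proof -
  have "(cmod (taylor_coeff f n))\<^sup>2 \<le> real (max 1 n) * (cmod (taylor_coeff f n))\<^sup>2"
    by (simp add: mult_le_cancel_right1)
  also have "\<dots> \<le> (cmod (f 0))\<^sup>2 + (\<Sum>n. real n * (cmod (taylor_coeff f n))\<^sup>2)"
  proof (cases "n = 0")
    case True
    then show ?thesis using suminf_nonneg[OF summable_dnorm_series[OF f]] by simp
  next
    case False
    have "real n * (cmod (taylor_coeff f n))\<^sup>2 \<le> (\<Sum>n. real n * (cmod (taylor_coeff f n))\<^sup>2)"
      using sum_le_suminf[OF summable_dnorm_series[OF f], of "{n}"] by simp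
    then show ?thesis using False by (simp add: max_def add_increasing)
  qed
  also have "\<dots> = (dnorm f)\<^sup>2" using dnorm_square[OF f] by simp
  finally show ?thesis using dnorm_nonneg[of f] by (simp add: power2_le_iff_abs_le)
qed

lemma dirichlet_space_norm_le:
  assumes f: "f \<in> dirichlet_space" and z: "z \<in> disc"
  shows "cmod (f z) \<le> dnorm f / (1 - cmod z)"
proof -
  have z1: "cmod z < 1" using z by simp
  have sn: "summable (\<lambda>n. norm (taylor_coeff f n * z ^ n))"
    using summable_norm_taylor_coeff[OF dirichlet_space_holomorphic[OF f] z1] by (simp add: norm_mult norm_power)
  have "cmod (f z) \<le> (\<Sum>n. norm (taylor_coeff f n * z ^ n))"
    using taylor_coeff_sums[OF dirichlet_space_holomorphic[OF f] z] summable_norm[OF sn]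
    by (simp add: sums_iff)
  also have "\<dots> \<le> (\<Sum>n. dnorm f * cmod z ^ n)"
    using sn z1 norm_taylor_coeff_le_dnorm[OF f]
    by (intro suminf_le summable_mult summable_geometric) (auto simp: norm_mult norm_power mult_right_mono)
  also have "\<dots> = dnorm f / (1 - cmod z)"
    using suminf_geometric[of "cmod z"] z1 by (simp add: suminf_mult divide_simps)
  finally show ?thesis .
qed

lemma dirichlet_space_eqI:
  assumes f: "f \<in> dirichlet_space" and g: "g \<in> dirichlet_space"
    and "\<And>n. taylor_coeff f n = taylor_coeff g n"
  shows "f = g"
proof
  fix z show "f z = g z"
    using assms taylor_coeff_sums[OF dirichlet_space_holomorphic[OF f], of z]
      taylor_coeff_sums[OF dirichlet_space_holomorphic[OF g], of z]
    by (cases "z \<in> disc") (auto simp: dirichlet_space_outside sums_unique2)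
qed

section \<open>Taylor multipliers\<close>

lemma
  assumes "induces u g"
  shows induces_holomorphic: "g holomorphic_on disc"
    and induces_deriv_sums: "\<zeta> \<in> disc \<Longrightarrow> (\<lambda>k. u (int (Suc k)) * \<zeta> ^ k) sums deriv g \<zeta>"
proof -
  define c where "c = (\<lambda>n. u (int n) / of_real (mono_norm_sq n))"
  have s: "\<And>z. z \<in> disc \<Longrightarrow> (\<lambda>n. c n * z ^ n) sums g z"
    using assms unfolding induces_def c_def by auto
  show hg: "g holomorphic_on disc"
    by (rule power_series_holomorphic[where a=c]) (use s in auto)
  \<comment> \<open>differentiation cancels the weight \<open>\<parallel>z^(k+1)\<parallel>\<^sup>2 = k+1\<close>\<close>
  have "taylor_coeff (deriv g) k = u (int (Suc k))" for k
    using taylor_coeff_unique[OF s, of "Suc k"]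
    by (simp add: taylor_coeff_deriv c_def mono_norm_sq_def del: of_nat_Suc)
  then show "\<zeta> \<in> disc \<Longrightarrow> (\<lambda>k. u (int (Suc k)) * \<zeta> ^ k) sums deriv g \<zeta>"
    using taylor_coeff_sums[OF holomorphic_deriv[OF hg]] by simp
qed

lemma sums_set_integral_deriv_mult:
  assumes f: "f \<in> dirichlet_space" and z: "z \<in> disc" and B: "\<And>k. cmod (a k) \<le> B"
    and h: "\<And>\<zeta>. \<zeta> \<in> disc \<Longrightarrow> (\<lambda>k. a k * \<zeta> ^ k) sums h \<zeta>"
  shows "(\<lambda>k. a k * z ^ k * (pi * taylor_coeff f (Suc k))) sums (LINT w:disc|lborel. deriv f w * h (z * cnj w))"
proof -
  have zw: "z * cnj w \<in> disc" if "w \<in> disc" for w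
  proof -
    have "norm z * norm w \<le> norm w" using z by (intro mult_left_le_one_le) auto
    then show ?thesis using that by (simp add: norm_mult)
  qed
  have bound: "norm (a k * (z * cnj w) ^ k) \<le> B * norm z ^ k" if "w \<in> disc" for k w
  proof -
    have "norm ((z * cnj w) ^ k) \<le> norm z ^ k"
      using that by (simp add: norm_mult norm_power power_mult_distrib mult_left_le power_le_one)
    then show ?thesis unfolding norm_mult using order_trans[OF norm_ge_zero B] by (intro mult_mono B) auto
  qed
  have "(\<lambda>k. LINT w:disc|lborel. deriv f w * (a k * (z * cnj w) ^ k))
      sums (LINT w:disc|lborel. deriv f w * h (z * cnj w))"
  proof (rule sums_set_integral_dominated[where G="\<lambda>w. norm (deriv f w)" and c="\<lambda>k. B * norm z ^ k"])
    show "set_integrable lborel disc (\<lambda>w. deriv f w * (a k * (z * cnj w) ^ k))" for k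
      by (rule set_integrable_disc_deriv_mult_bounded[OF f _ bound]) (intro continuous_intros)
    show "set_integrable lborel disc (\<lambda>w. norm (deriv f w))"
      using set_integrable_disc_deriv[OF f] by (rule set_integrable_norm)
    show "summable (\<lambda>k. B * norm z ^ k)" using z by (intro summable_mult summable_geometric) simp
    fix k and w :: complex assume w: "w \<in> disc"
    show "norm (deriv f w * (a k * (z * cnj w) ^ k)) \<le> B * norm z ^ k * norm (deriv f w)"
      using bound[OF w, of k] by (simp add: norm_mult mult.commute mult_left_mono)
    show "(\<lambda>k. deriv f w * (a k * (z * cnj w) ^ k)) sums (deriv f w * h (z * cnj w))"
      using h[OF zw[OF w]] by (rule sums_mult)
  qed
  moreover have "(LINT w:disc|lborel. deriv f w * (a k * (z * cnj w) ^ k))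
      = a k * z ^ k * (pi * taylor_coeff f (Suc k))" for k
  proof -
    have "(LINT w:disc|lborel. deriv f w * (a k * (z * cnj w) ^ k))
        = (LINT w:disc|lborel. (a k * z ^ k) * (deriv f w * cnj w ^ k))"
      by (simp add: power_mult_distrib mult_ac)
    then show ?thesis by (simp add: set_integral_disc_deriv_cnj_power[OF f])
  qed
  ultimately show ?thesis by simp
qed

text \<open>Pairing \<open>f'(w)\<close> with \<open>g'(z cnj w)\<close> picks out \<open>u(n) a\<^sub>n z\<^sup>n\<close> term by term, so the
  integral formula is the Taylor multiplier with symbol \<open>u\<close>.\<close>
lemma integral_representation_sums:
  assumes g: "induces u g" and B: "\<And>m::nat. cmod (u (int m)) \<le> B"
    and f: "f \<in> dirichlet_space" and z: "z \<in> disc"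
  shows "(\<lambda>n. u (int n) * taylor_coeff f n * z ^ n) sums
    (u 0 * f 0 + z * ((LINT w:disc|lborel. deriv f w * deriv g (z * cnj w)) / of_real pi))"
proof -
  define I where "I = (LINT w:disc|lborel. deriv f w * deriv g (z * cnj w))"
  have "(\<lambda>k. u (int (Suc k)) * z ^ k * (pi * taylor_coeff f (Suc k))) sums I"
    unfolding I_def using f z B induces_deriv_sums[OF g] by (rule sums_set_integral_deriv_mult)
  then have "(\<lambda>k. z / of_real pi * (u (int (Suc k)) * z ^ k * (pi * taylor_coeff f (Suc k)))) sums (z / of_real pi * I)"
    by (rule sums_mult)
  then have "(\<lambda>k. u (int (Suc k)) * taylor_coeff f (Suc k) * z ^ Suc k) sums (z * (I / of_real pi))"
    by (simp add: field_simps)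
  then have "(\<lambda>n. u (int n) * taylor_coeff f n * z ^ n) sums (z * (I / of_real pi) + u (int 0) * taylor_coeff f 0 * z ^ 0)"
    by (subst (asm) sums_Suc_iff)
  then show ?thesis by (simp add: I_def add.commute)
qed

definition taylor_multiplier ::
    "(nat \<Rightarrow> complex) \<Rightarrow> ((complex \<Rightarrow> complex) \<Rightarrow> (complex \<Rightarrow> complex)) \<Rightarrow> bool" where
  "taylor_multiplier \<mu> R \<longleftrightarrow> (\<forall>f\<in>dirichlet_space. R f \<in> dirichlet_space \<and>
     (\<forall>n. taylor_coeff (R f) n = \<mu> n * taylor_coeff f n))"

lemma taylor_multiplierD:
  assumes "taylor_multiplier \<mu> R" "f \<in> dirichlet_space"
  shows "R f \<in> dirichlet_space" "taylor_coeff (R f) n = \<mu> n * taylor_coeff f n"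
  using assms by (auto simp: taylor_multiplier_def)

lemma taylor_multiplier_bounded:
  assumes R: "taylor_multiplier \<mu> R" and B: "\<And>n. cmod (\<mu> n) \<le> B"
  shows "bounded_on_dirichlet R"
  unfolding bounded_on_dirichlet_def
proof (intro exI ballI)
  fix f assume f: "f \<in> dirichlet_space"
  note Rf = taylor_multiplierD[OF R f]
  have B2: "(cmod (\<mu> n))\<^sup>2 \<le> B\<^sup>2" for n using B[of n] by (intro power_mono) auto
  have "(dnorm (R f))\<^sup>2 = (cmod (R f 0))\<^sup>2 + (\<Sum>n. real n * (cmod (taylor_coeff (R f) n))\<^sup>2)"
    by (rule dnorm_square[OF Rf(1)])
  also have "\<dots> \<le> B\<^sup>2 * (cmod (f 0))\<^sup>2 + (\<Sum>n. B\<^sup>2 * (real n * (cmod (taylor_coeff f n))\<^sup>2))"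
  proof (rule add_mono)
    show "(cmod (R f 0))\<^sup>2 \<le> B\<^sup>2 * (cmod (f 0))\<^sup>2"
      using Rf(2)[of 0] B2[of 0] by (simp add: norm_mult power_mult_distrib mult_right_mono)
    show "(\<Sum>n. real n * (cmod (taylor_coeff (R f) n))\<^sup>2) \<le> (\<Sum>n. B\<^sup>2 * (real n * (cmod (taylor_coeff f n))\<^sup>2))"
    proof (rule suminf_le)
      fix n
      have eq: "real n * (cmod (taylor_coeff (R f) n))\<^sup>2 = (cmod (\<mu> n))\<^sup>2 * (real n * (cmod (taylor_coeff f n))\<^sup>2)"
        by (simp add: Rf(2) norm_mult power_mult_distrib)
      show "real n * (cmod (taylor_coeff (R f) n))\<^sup>2 \<le> B\<^sup>2 * (real n * (cmod (taylor_coeff f n))\<^sup>2)"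
        unfolding eq by (rule mult_right_mono[OF B2]) simp
    qed (use summable_dnorm_series[OF Rf(1)] summable_mult[OF summable_dnorm_series[OF f]] in auto)
  qed
  also have "\<dots> = B\<^sup>2 * ((cmod (f 0))\<^sup>2 + (\<Sum>n. real n * (cmod (taylor_coeff f n))\<^sup>2))"
    using suminf_mult[OF summable_dnorm_series[OF f], of "B\<^sup>2"] by (simp only: distrib_left)
  also have "\<dots> = (B * dnorm f)\<^sup>2"
    by (simp only: power_mult_distrib dnorm_square[OF f])
  finally have "(dnorm (R f))\<^sup>2 \<le> (B * dnorm f)\<^sup>2" .
  then show "dnorm (R f) \<le> B * dnorm f"
    by (rule power2_le_imp_le) (use order_trans[OF norm_ge_zero B] dnorm_nonneg[of f] in simp)
qed

lemma taylor_multiplier_radial: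
  assumes R: "taylor_multiplier \<mu> R"
  shows "radial_on_dirichlet R"
  unfolding radial_on_dirichlet_def
proof (intro allI impI ballI)
  fix l :: complex and f assume l: "cmod l = 1" and f: "f \<in> dirichlet_space"
  have lf: "rot l f \<in> dirichlet_space" by (rule dirichlet_space_rotation[OF f l])
  show "R (rot l f) = rot l (R f)"
  proof (rule dirichlet_space_eqI)
    show "R (rot l f) \<in> dirichlet_space" by (rule taylor_multiplierD(1)[OF R lf])
    show "rot l (R f) \<in> dirichlet_space" by (rule dirichlet_space_rotation[OF taylor_multiplierD(1)[OF R f] l])
    fix n
    have "taylor_coeff (R (rot l f)) n = \<mu> n * (l ^ n * taylor_coeff f n)"
      by (simp add: taylor_multiplierD(2)[OF R lf] taylor_coeff_rotation[OF dirichlet_space_holomorphic[OF f] l])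
    also have "\<dots> = l ^ n * taylor_coeff (R f) n" by (simp add: taylor_multiplierD(2)[OF R f])
    also have "\<dots> = taylor_coeff (rot l (R f)) n"
      by (simp add: taylor_coeff_rotation[OF dirichlet_space_holomorphic[OF taylor_multiplierD(1)[OF R f]] l])
    finally show "taylor_coeff (R (rot l f)) n = taylor_coeff (rot l (R f)) n" .
  qed
qed

lemma integral_representation_imp_taylor_multiplier:
  assumes R: "\<And>f. f \<in> dirichlet_space \<Longrightarrow> R f \<in> dirichlet_space"
    and g: "induces u g" and B: "\<And>m::nat. cmod (u (int m)) \<le> B"
    and formula: "\<forall>f\<in>dirichlet_space. \<forall>z\<in>disc. R f z = u 0 * f 0 +
            z * ((LINT w:disc|lborel. deriv f w * deriv g (z * cnj w)) / of_real pi)"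
  shows "taylor_multiplier (\<lambda>n. u (int n)) R"
  unfolding taylor_multiplier_def
proof (intro ballI conjI allI)
  fix f n assume f: "f \<in> dirichlet_space"
  show "R f \<in> dirichlet_space" by (rule R[OF f])
  show "taylor_coeff (R f) n = u (int n) * taylor_coeff f n"
  proof (rule taylor_coeff_unique)
    fix z :: complex assume z: "z \<in> disc"
    show "(\<lambda>n. u (int n) * taylor_coeff f n * z ^ n) sums R f z"
      unfolding formula[rule_format, OF f z] by (rule integral_representation_sums[OF g B f z])
  qed
qed

lemma induces_suminf:
  assumes B: "\<And>m::nat. cmod (u (int m)) \<le> B"
  shows "induces u (\<lambda>z. \<Sum>n. u (int n) / of_real (mono_norm_sq n) * z ^ n)"
  unfolding induces_def
proof (intro ballI summable_sums)
  fix z :: complex assume z: "z \<in> disc"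
  show "summable (\<lambda>n. u (int n) / of_real (mono_norm_sq n) * z ^ n)"
  proof (rule summable_comparison_test[OF _ summable_mult[OF summable_geometric[of "cmod z"]]], intro exI allI impI)
    fix n
    have "mono_norm_sq n \<ge> 1" by (simp add: mono_norm_sq_def)
    then have "cmod (u (int n) / of_real (mono_norm_sq n)) \<le> cmod (u (int n))"
      by (simp add: norm_divide divide_le_eq mult_le_cancel_left1)
    then show "norm (u (int n) / of_real (mono_norm_sq n) * z ^ n) \<le> B * cmod z ^ n"
      unfolding norm_mult norm_power using order_trans[OF _ B[of n]] by (intro mult_right_mono) auto
  qed (use z in simp)
qed

lemma taylor_multiplier_imp_integral_representation:
  assumes R: "taylor_multiplier \<mu> R" and C: "\<And>n. cmod (\<mu> n) \<le> C"
  shows "\<exists>u g. periodic_distribution u \<and> (\<exists>B. \<forall>m::nat. cmod (u (int m)) \<le> B) \<and>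
       induces u g \<and> g holomorphic_on disc \<and>
       (\<forall>f\<in>dirichlet_space. \<forall>z\<in>disc.
          R f z = u 0 * f 0 +
            z * ((LINT w:disc|lborel. deriv f w * deriv g (z * cnj w)) / of_real pi))"
proof -
  define u where "u = (\<lambda>i::int. if 0 \<le> i then \<mu> (nat i) else 0)"
  have u_nat [simp]: "u (int m) = \<mu> m" for m by (simp add: u_def)
  have uC: "cmod (u i) \<le> C" for i using C order_trans[OF norm_ge_zero C] by (simp add: u_def)
  define g where "g = (\<lambda>z. \<Sum>n. u (int n) / of_real (mono_norm_sq n) * z ^ n)"
  have g: "induces u g" unfolding g_def by (rule induces_suminf[OF uC])
  show ?thesis
  proof (intro exI[of _ u] exI[of _ g] conjI ballI)
    show "periodic_distribution u" unfolding periodic_distribution_def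
      by (intro exI[of _ C] exI[of _ 0]) (simp add: uC)
    show "\<exists>B. \<forall>m::nat. cmod (u (int m)) \<le> B" using uC by blast
    show "induces u g" by (rule g)
    then show "g holomorphic_on disc" by (rule induces_holomorphic)
    fix f z assume f: "f \<in> dirichlet_space" and z: "z \<in> disc"
    have "(\<lambda>n. u (int n) * taylor_coeff f n * z ^ n) sums R f z"
      using taylor_coeff_sums[OF dirichlet_space_holomorphic[OF taylor_multiplierD(1)[OF R f]] z]
      by (simp add: taylor_multiplierD(2)[OF R f])
    then show "R f z = u 0 * f 0 + z * ((LINT w:disc|lborel. deriv f w * deriv g (z * cnj w)) / of_real pi)"
      using integral_representation_sums[OF g uC f z] by (simp add: sums_unique2)
  qed
qed

section \<open>Radial operators\<close>

lemma
  assumes "linear_on_dirichlet R" "f \<in> dirichlet_space"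
  shows linear_on_dirichlet_in_space: "R f \<in> dirichlet_space"
    and linear_on_dirichlet_add:
      "g \<in> dirichlet_space \<Longrightarrow> R (\<lambda>z. f z + g z) = (\<lambda>z. R f z + R g z)"
    and linear_on_dirichlet_cmult: "R (\<lambda>z. c * f z) = (\<lambda>z. c * R f z)"
  using assms unfolding linear_on_dirichlet_def by auto

lemma dirichlet_space_sum:
  fixes c :: "nat \<Rightarrow> complex" and N :: nat
  assumes \<phi>: "\<And>n. \<phi> n \<in> dirichlet_space"
  shows "(\<lambda>z. \<Sum>n<N. c n * \<phi> n z) \<in> dirichlet_space"
proof (induction N)
  case 0
  have "(\<lambda>z. \<Sum>n<0. c n * \<phi> n z) = (\<lambda>z. 0 * \<phi> 0 z)" by simp
  then show ?case using dirichlet_space_cmult[OF \<phi>] by metis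
next
  case (Suc N)
  have "(\<lambda>z. \<Sum>n<Suc N. c n * \<phi> n z) = (\<lambda>z. (\<Sum>n<N. c n * \<phi> n z) + c N * \<phi> N z)" by simp
  then show ?case using dirichlet_space_add[OF Suc dirichlet_space_cmult[OF \<phi>]] by simp
qed

lemma linear_on_dirichlet_sum:
  fixes c :: "nat \<Rightarrow> complex" and N :: nat
  assumes R: "linear_on_dirichlet R" and \<phi>: "\<And>n. \<phi> n \<in> dirichlet_space"
  shows "R (\<lambda>z. \<Sum>n<N. c n * \<phi> n z) = (\<lambda>z. \<Sum>n<N. c n * R (\<phi> n) z)"
proof (induction N)
  case 0
  have "(\<lambda>z. \<Sum>n<0. c n * \<phi> n z) = (\<lambda>z. 0 * \<phi> 0 z)" by simp
  then show ?case using linear_on_dirichlet_cmult[OF R \<phi>, of 0 0] by simp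
next
  case (Suc N)
  have "(\<lambda>z. \<Sum>n<Suc N. c n * \<phi> n z) = (\<lambda>z. (\<Sum>n<N. c n * \<phi> n z) + c N * \<phi> N z)" by simp
  then show ?case
    using Suc linear_on_dirichlet_add[OF R dirichlet_space_sum[OF \<phi>] dirichlet_space_cmult[OF \<phi>]]
      linear_on_dirichlet_cmult[OF R \<phi>]
    by simp
qed

definition taylor_poly :: "(complex \<Rightarrow> complex) \<Rightarrow> nat \<Rightarrow> complex \<Rightarrow> complex" where
  "taylor_poly f N = (\<lambda>z. \<Sum>n<N. taylor_coeff f n * disc_monomial n z)"

text \<open>Written as \<open>f + (-1) p\<close> because this is the only form in which linearity of an operator
  on the Dirichlet space is available.\<close>
definition taylor_remainder :: "(complex \<Rightarrow> complex) \<Rightarrow> nat \<Rightarrow> complex \<Rightarrow> complex" where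
  "taylor_remainder f N = (\<lambda>z. f z + (-1) * taylor_poly f N z)"

lemma taylor_poly_in_dirichlet_space: "taylor_poly f N \<in> dirichlet_space"
  unfolding taylor_poly_def by (rule dirichlet_space_sum[OF disc_monomial_in_dirichlet_space])

lemma taylor_remainder_in_dirichlet_space:
  "f \<in> dirichlet_space \<Longrightarrow> taylor_remainder f N \<in> dirichlet_space"
  unfolding taylor_remainder_def
  by (intro dirichlet_space_add dirichlet_space_cmult taylor_poly_in_dirichlet_space)

lemma taylor_coeff_taylor_poly: "taylor_coeff (taylor_poly f N) k = (if k < N then taylor_coeff f k else 0)"
proof (rule taylor_coeff_unique)
  fix z :: complex assume "z \<in> disc"
  have "(\<lambda>k. (if k < N then taylor_coeff f k else 0) * z ^ k)
      sums (\<Sum>k\<in>{..<N}. (if k < N then taylor_coeff f k else 0) * z ^ k)"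
    by (rule sums_finite) auto
  then show "(\<lambda>k. (if k < N then taylor_coeff f k else 0) * z ^ k) sums taylor_poly f N z"
    using \<open>z \<in> disc\<close> by (simp add: taylor_poly_def disc_monomial_def)
qed

lemma taylor_coeff_taylor_remainder:
  assumes f: "f \<in> dirichlet_space"
  shows "taylor_coeff (taylor_remainder f N) n = (if n < N then 0 else taylor_coeff f n)"
proof -
  note hp = dirichlet_space_holomorphic[OF taylor_poly_in_dirichlet_space]
  have "taylor_coeff (taylor_remainder f N) n = taylor_coeff f n + (-1) * taylor_coeff (taylor_poly f N) n"
    unfolding taylor_remainder_def using dirichlet_space_holomorphic[OF f]
    by (simp only: taylor_coeff_add holomorphic_on_mult[OF holomorphic_on_const hp] taylor_coeff_cmult[OF hp])
  then show ?thesis by (simp add: taylor_coeff_taylor_poly)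
qed

lemma dnorm_taylor_remainder_square:
  assumes f: "f \<in> dirichlet_space"
  defines "c \<equiv> \<lambda>n. real n * (cmod (taylor_coeff f n))\<^sup>2"
  shows "(dnorm (taylor_remainder f N))\<^sup>2 = (if N = 0 then (cmod (f 0))\<^sup>2 else 0) + (suminf c - (\<Sum>n<N. c n))"
proof -
  note coeff = taylor_coeff_taylor_remainder[OF f]
  have "(\<lambda>n. c n - (if n < N then c n else 0)) sums (suminf c - (\<Sum>n<N. if n < N then c n else 0))"
    using summable_dnorm_series[OF f] unfolding c_def by (intro sums_diff summable_sums sums_finite) auto
  moreover have "(\<lambda>n. real n * (cmod (taylor_coeff (taylor_remainder f N) n))\<^sup>2)
      = (\<lambda>n. c n - (if n < N then c n else 0))"
    by (simp add: coeff c_def fun_eq_iff)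
  moreover have "taylor_remainder f N 0 = (if N = 0 then f 0 else 0)"
    using coeff[of N 0] by simp
  ultimately show ?thesis
    using dnorm_square[OF taylor_remainder_in_dirichlet_space[OF f, of N]] by (simp add: sums_iff)
qed

lemma tendsto_dnorm_taylor_remainder:
  assumes f: "f \<in> dirichlet_space"
  shows "(\<lambda>N. dnorm (taylor_remainder f N)) \<longlonglongrightarrow> 0"
proof -
  define c where "c = (\<lambda>n. real n * (cmod (taylor_coeff f n))\<^sup>2)"
  have "(\<lambda>N. suminf c - (\<Sum>n<N. c n)) \<longlonglongrightarrow> suminf c - suminf c"
    using summable_dnorm_series[OF f] unfolding c_def
    by (intro tendsto_diff tendsto_const summable_LIMSEQ)
  moreover have "eventually (\<lambda>N. suminf c - (\<Sum>n<N. c n) = (dnorm (taylor_remainder f N))\<^sup>2) sequentially"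
    using eventually_gt_at_top[of 0]
    by eventually_elim (simp add: dnorm_taylor_remainder_square[OF f] c_def)
  ultimately have "(\<lambda>N. (dnorm (taylor_remainder f N))\<^sup>2) \<longlonglongrightarrow> suminf c - suminf c"
    by (rule Lim_transform_eventually)
  then have "(\<lambda>N. sqrt ((dnorm (taylor_remainder f N))\<^sup>2)) \<longlonglongrightarrow> sqrt (suminf c - suminf c)"
    by (rule tendsto_real_sqrt)
  then show ?thesis using dnorm_nonneg by simp
qed

lemma bounded_eigen_monomials_sums:
  assumes R: "linear_on_dirichlet R" and C: "\<And>f. f \<in> dirichlet_space \<Longrightarrow> dnorm (R f) \<le> C * dnorm f"
    and eigen: "\<And>m. R (disc_monomial m) = (\<lambda>z. \<mu> m * disc_monomial m z)"
    and f: "f \<in> dirichlet_space" and z: "z \<in> disc"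
  shows "(\<lambda>n. \<mu> n * taylor_coeff f n * z ^ n) sums R f z"
proof -
  note p = taylor_poly_in_dirichlet_space and d = taylor_remainder_in_dirichlet_space[OF f]
  have "R (taylor_poly f N) = (\<lambda>z. \<Sum>n<N. taylor_coeff f n * (\<mu> n * disc_monomial n z))" for N
    unfolding taylor_poly_def linear_on_dirichlet_sum[OF R disc_monomial_in_dirichlet_space] eigen ..
  then have "R (taylor_remainder f N) z = R f z - (\<Sum>n<N. \<mu> n * taylor_coeff f n * z ^ n)" for N
    using z unfolding taylor_remainder_def linear_on_dirichlet_add[OF R f dirichlet_space_cmult[OF p]]
      linear_on_dirichlet_cmult[OF R p]
    by (simp add: disc_monomial_def mult_ac)
  then have "norm ((\<Sum>n<N. \<mu> n * taylor_coeff f n * z ^ n) - R f z) = norm (R (taylor_remainder f N) z)" for N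
    by (simp add: norm_minus_commute)
  also have "\<dots> N \<le> dnorm (R (taylor_remainder f N)) / (1 - cmod z)" for N
    by (rule dirichlet_space_norm_le[OF linear_on_dirichlet_in_space[OF R d] z])
  also have "\<dots> N \<le> C * dnorm (taylor_remainder f N) / (1 - cmod z)" for N
    using z by (intro divide_right_mono C d) simp
  finally have bound: "norm ((\<Sum>n<N. \<mu> n * taylor_coeff f n * z ^ n) - R f z)
      \<le> C * dnorm (taylor_remainder f N) / (1 - cmod z)" for N .
  have "(\<lambda>N. C * dnorm (taylor_remainder f N) / (1 - cmod z)) \<longlonglongrightarrow> C * 0 / (1 - cmod z)"
    using tendsto_dnorm_taylor_remainder[OF f] z by (intro tendsto_intros) auto
  then have "(\<lambda>N. C * dnorm (taylor_remainder f N) / (1 - cmod z)) \<longlonglongrightarrow> 0" by simp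
  with always_eventually[OF allI[OF bound]]
  have "(\<lambda>N. (\<Sum>n<N. \<mu> n * taylor_coeff f n * z ^ n) - R f z) \<longlonglongrightarrow> 0"
    by (rule Lim_null_comparison)
  then show ?thesis by (simp add: sums_def LIM_zero_iff)
qed

lemma rot_disc_monomial: "cmod l = 1 \<Longrightarrow> rot l (disc_monomial m) = (\<lambda>z. l ^ m * disc_monomial m z)"
  by (auto simp: rot_def disc_monomial_def fun_eq_iff norm_mult power_mult_distrib)

text \<open>Rotating by \<open>l\<close> multiplies the \<open>n\<close>-th Taylor coefficient of \<open>R z\<^sup>m\<close> by both \<open>l\<^sup>n\<close>
  and \<open>l\<^sup>m\<close>; a rotation with \<open>l\<^sup>n cnj l\<^sup>m = -1\<close> kills it unless \<open>n = m\<close>.\<close>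
lemma radial_on_dirichlet_disc_monomial:
  assumes R: "linear_on_dirichlet R" and rad: "radial_on_dirichlet R"
  shows "R (disc_monomial m) = (\<lambda>z. taylor_coeff (R (disc_monomial m)) m * disc_monomial m z)"
proof -
  define h where "h = R (disc_monomial m)"
  have h: "h \<in> dirichlet_space"
    unfolding h_def by (rule linear_on_dirichlet_in_space[OF R disc_monomial_in_dirichlet_space])
  have eigen: "l ^ n * taylor_coeff h n = l ^ m * taylor_coeff h n" if l: "cmod l = 1" for l n
  proof -
    have "rot l h = R (rot l (disc_monomial m))"
      using rad l disc_monomial_in_dirichlet_space unfolding radial_on_dirichlet_def h_def by auto
    also have "\<dots> = (\<lambda>z. l ^ m * h z)"
      unfolding rot_disc_monomial[OF l] linear_on_dirichlet_cmult[OF R disc_monomial_in_dirichlet_space] h_def ..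
    finally show ?thesis
      using dirichlet_space_holomorphic[OF h] l
      by (metis taylor_coeff_rotation taylor_coeff_cmult)
  qed
  have "taylor_coeff h n = 0" if nm: "n \<noteq> m" for n
  proof -
    obtain l where l: "cmod l = 1" "l ^ n * cnj l ^ m = -1"
      using exists_unimodular_power_cnj_power_eq_minus_one[OF nm] .
    have "l ^ m * cnj l ^ m = 1"
      using cnj_mult_self_eq_1[OF l(1)] by (simp add: power_mult_distrib[symmetric] mult.commute)
    then have "taylor_coeff h n = cnj l ^ m * (l ^ m * taylor_coeff h n)" by (simp add: mult_ac)
    also have "\<dots> = cnj l ^ m * (l ^ n * taylor_coeff h n)" by (simp only: eigen[OF l(1)])
    also have "\<dots> = (l ^ n * cnj l ^ m) * taylor_coeff h n" by (simp add: mult_ac)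
    finally show ?thesis using l(2) by simp
  qed
  then have "taylor_coeff h n = taylor_coeff (\<lambda>z. taylor_coeff h m * disc_monomial m z) n" for n
    by (simp add: taylor_coeff_cmult[OF disc_monomial_holomorphic] taylor_coeff_disc_monomial)
  then show ?thesis
    unfolding h_def[symmetric]
    by (intro dirichlet_space_eqI[OF h] dirichlet_space_cmult disc_monomial_in_dirichlet_space)
qed

lemma bounded_radial_imp_taylor_multiplier:
  assumes R: "linear_on_dirichlet R" and bd: "bounded_on_dirichlet R" and rad: "radial_on_dirichlet R"
  obtains \<mu> C where "taylor_multiplier \<mu> R" "\<And>n. cmod (\<mu> n) \<le> C"
proof -
  obtain C where C: "\<And>f. f \<in> dirichlet_space \<Longrightarrow> dnorm (R f) \<le> C * dnorm f"
    using bd unfolding bounded_on_dirichlet_def by blast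
  define \<mu> where "\<mu> = (\<lambda>m. taylor_coeff (R (disc_monomial m)) m)"
  have eigen: "R (disc_monomial m) = (\<lambda>z. \<mu> m * disc_monomial m z)" for m
    unfolding \<mu>_def by (rule radial_on_dirichlet_disc_monomial[OF R rad])
  have "cmod (\<mu> m) \<le> C" for m
  proof -
    have "dnorm (disc_monomial m) > 0"
      using dnorm_disc_monomial[of m] dnorm_nonneg[of "disc_monomial m"]
      by (cases "dnorm (disc_monomial m) = 0") (auto simp: mono_norm_sq_def split: if_splits)
    moreover have "cmod (\<mu> m) * dnorm (disc_monomial m) \<le> C * dnorm (disc_monomial m)"
      using C[OF disc_monomial_in_dirichlet_space, of m]
      by (simp add: eigen dnorm_cmult[OF disc_monomial_in_dirichlet_space])
    ultimately show ?thesis by simp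
  qed
  moreover have "taylor_multiplier \<mu> R"
    unfolding taylor_multiplier_def
  proof (intro ballI conjI allI)
    fix f n assume f: "f \<in> dirichlet_space"
    show "R f \<in> dirichlet_space" by (rule linear_on_dirichlet_in_space[OF R f])
    show "taylor_coeff (R f) n = \<mu> n * taylor_coeff f n"
      using bounded_eigen_monomials_sums[OF R C eigen f] by (intro taylor_coeff_unique) (simp add: mult.assoc)
  qed
  ultimately show ?thesis using that by blast
qed

theorem theorem5p1:
  fixes R :: "(complex \<Rightarrow> complex) \<Rightarrow> (complex \<Rightarrow> complex)"
  assumes "linear_on_dirichlet R"
  shows "(bounded_on_dirichlet R \<and> radial_on_dirichlet R) \<longleftrightarrow>
    (\<exists>u g. periodic_distribution u \<and> (\<exists>B. \<forall>m::nat. cmod (u (int m)) \<le> B) \<and>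
       induces u g \<and> g holomorphic_on disc \<and>
       (\<forall>f\<in>dirichlet_space. \<forall>z\<in>disc.
          R f z = u 0 * f 0 +
            z * ((LINT w:disc|lborel. deriv f w * deriv g (z * cnj w)) / of_real pi)))"
    (is "?bounded_radial \<longleftrightarrow> (\<exists>u g. ?representation u g)")
proof
  assume "?bounded_radial"
  then obtain \<mu> C where "taylor_multiplier \<mu> R" "\<And>n. cmod (\<mu> n) \<le> C"
    using bounded_radial_imp_taylor_multiplier[OF assms] by blast
  then show "\<exists>u g. ?representation u g" by (rule taylor_multiplier_imp_integral_representation)
next
  assume "\<exists>u g. ?representation u g"
  then obtain u g B where "induces u g" "\<And>m::nat. cmod (u (int m)) \<le> B"
    "\<forall>f\<in>dirichlet_space. \<forall>z\<in>disc. R f z = u 0 * f 0 +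
       z * ((LINT w:disc|lborel. deriv f w * deriv g (z * cnj w)) / of_real pi)"
    by blast
  then have "taylor_multiplier (\<lambda>n. u (int n)) R"
    using linear_on_dirichlet_in_space[OF assms] by (intro integral_representation_imp_taylor_multiplier)
  then show "?bounded_radial"
    using taylor_multiplier_bounded taylor_multiplier_radial \<open>\<And>m. cmod (u (int m)) \<le> B\<close> by blast
qed

end
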